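(* Every safe and aperiodic program is terminating, i.e. $\llbracket\mathtt{P}\rrbracket$ is a total function for every $\mathtt{P}\in\mathrm{SAFE}\cap\mathrm{AP}$. Moreover, the inclusion $\llbracket\mathrm{SAFE}\cap\mathrm{AP}\rrbracket\subseteq\llbracket\mathrm{TERM}\rrbracket$ is strict: some terminating program computes a function not computed by any safe aperiodic program.
   Context: Words and values. $\Sigma\supseteq\{0,1\}$ is a finite alphabet and $\mathbb{W}=\Sigma^*$. Here $|w|$ is the length of $w$ and $1^n$ is the word of $n$ ones. A word counts as true iff it equals $1$. Write $v\unlhd w$ if $w=uvu'$ for some $u,u'$. Operators. Fix a countable set $\mathbb{V}$ of variables and a set $\mathbb{O}$ of operators. Each $\mathsf{op}$ has an arity and a total function $\llbracket\mathsf{op}\rrbracket:\mathbb{W}^{ar(\mathsf{op})}\to\mathbb{W}$. The set $\mathbb{O}$ includes $=,<,\le,0,+1,-1,\mathsf{not},\mathsf{and},\mathsf{or}$. Syntax. - Expressions: $e::=x\mid\mathsf{op}(\bar e)\mid\mathsf{declass}(e,e)$. - Statements: $s::=\mathtt{skip}\mid x:=e\mid s;s\mid\mathtt{if}(e)\{s\}\mathtt{else}\{s\}\mid\mathtt{while}(e)\{s\}\mid\mathtt{break}(e)$. - Programs: $\mathtt{prog}(\bar x)\{s\ \mathtt{return}\ y\}$, with $\mathrm{body}(\mathtt{P})=s$. Semantics. - Stores are total maps $\mathbb{V}\to\mathbb{W}$; the store $\mu_\emptyset$ is constantly $\epsilon$. - $\mathsf{declass}(e_1,e_2)$ evaluates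 to $1^{\min(|w_1|,|w_2|)}$, where $w_i$ is the value of $e_i$. Other expressions evaluate as usual. - Statements evaluate, big-step, to $(\square,\mu')$ with $\square\in\{\top,\bot\}$: - $\mathtt{break}(e)$ yields $\bot$ iff $e$ evaluates to $1$. - A sequence stops on $\bot$. - A conditional takes its first branch iff the guard is $1$. - $\mathtt{while}(e)\{s\}$ returns $(\top,\mu)$ if $e$ is not $1$, and otherwise evaluates $s;\mathtt{while}(e)\{s\}$ to some $(\square,\mu')$ and returns $(\top,\mu')$. - $\pi_c$ denotes the evaluation tree with root $c$; $\sqsubseteq$ and $\sqsubset$ denote the (strict) subtree relations. - $\llbracket\mathtt{P}\rrbracket(\bar w)=\mu'(y)$ when $(\mu_\emptyset[\bar x\leftarrow\bar w],s)$ evaluates to final store $\mu'$. - $\mathtt{P}$ is terminating ($\mathtt{P}\in\mathrm{TERM}$) if $\llbracket\mathtt{P}\rrbracket$ is total. Operator classes ($\mathsf{op}$ of arity $k$). - Neutral: $\llbracket\mathsf{op}\rrbracket$ has values in $\{0,1\}$, or for some $i$, $\llbracket\mathsf{op}\rrbracket(\bar w)\unlhd w_i$ for all $\bar w$. - Positive: $|\llbracket\mathsf{op}\rrbracket(\bar w)|\le\max_i|w_i|+c$ for some constant $c$. - Polynomial: $|\llbracket\mathsf{op}\rrbracket(\bar w)|\le P(\max_i|w_i|)$ for a polynomial $P$. - "Positive" means positive and not neutral; "polynomial" means polynomial and not positive. Typing judgments. Judgments are $\Gamma,\Delta\vdash^{\tau_{in}}_{\tau_{out}}b:\tau$ with levels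 in $\mathbb{N}$, where $\Gamma:\mathbb{V}\to\mathbb{N}$ and $\Delta(\mathsf{op}):\mathbb{N}^2\to\mathcal{P}(\mathbb{N}^{ar(\mathsf{op})+1})$. The rules are: - (VAR) If $\Gamma(x)=\tau$, then $x:\tau$. - (OP) If $\tau_1\to\dots\to\tau_{k+1}\in\Delta(\mathsf{op})(\tau_{in},\tau_{out})$ and $e_i:\tau_i$, then $\mathsf{op}(\bar e):\tau_{k+1}$. - (DCL) If $e_1:\tau_1$, $e_2:\tau_{out}$ and $\tau_1\le\tau\le\tau_{out}$, then $\mathsf{declass}(e_1,e_2):\tau$. - (SUB) Statements may be raised to a higher level. - (SKP) $\mathtt{skip}:0$. - (ASG) If $\Gamma(x)=\tau_1$, $e:\tau_2$, and ($\tau_{out}=0$ or $\tau_1\le\tau_2$), then $x:=e:\tau_1$. - (SEQ), (CND) All components have the same level $\tau$. - (WH) If $\vdash^{\tau}_{\tau_{out}}e:\tau$, $\vdash^{\tau}_{\tau_{out}}s:\tau$ and $1\le\tau\le\tau_{out}$, then $\vdash^{\tau_{in}}_{\tau_{out}}\mathtt{while}(e)\{s\}:\tau$. - (WI) If $\vdash^\tau_\tau e:\tau$, $\vdash^\tau_\tau s:\tau$ and $1\le\tau$, then $\vdash^0_0\mathtt{while}(e)\{s\}:\tau$. - (BRK) If $e:\tau$ and $\tau_{in}\le\tau$, then $\mathtt{break}(e):\tau_{in}$. Safe environments and programs. - $\Delta$ is safe if every operator in $dom(\Delta)$ is neutral, positive or polynomial and polytime computable, and each admissible tuple in $\Delta(\mathsf{op})(\tau_{in},\tau_{out})$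 satisfies: - if neutral, $\tau_{k+1}\le\min_i\tau_i$; - if positive, additionally $\tau_{k+1}<\tau_{in}$ or $\tau_{k+1}=0$; - if polynomial, $\tau_{out}=0$. - $\mathtt{P}\in\mathrm{SAFE}$ iff $\Gamma,\Delta\vdash^0_0\mathrm{body}(\mathtt{P}):\tau$ for some safe $\Delta$, some $\Gamma$ and some $\tau$. Aperiodicity. - $U(x)=\{x\}$, $U(\mathsf{op}(\bar e))=\bigcup U(e_i)$ and $U(\mathsf{declass}(e_1,e_2))=U(e_2)$. - $\mu\equiv_e\mu'$ iff $\mu,\mu'$ agree on $U(e)$. - $\mathtt{P}\in\mathrm{AP}$ iff for no store $\mu$ do there exist $\pi_{(\mu',s')}\sqsupset\pi_{(\mu'',s')}$, both subtrees of $\pi_{(\mu,\mathrm{body}(\mathtt{P}))}$, with $s'=\mathtt{while}(e)\{s''\}$ and $\mu'\equiv_e\mu''$. *)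

theory Defs
  imports "HOL-Library.Countable" "HOL-Computational_Algebra.Polynomial"
begin

text \<open>The alphabet Sigma is a finite type 'a with two distinct distinguished letters
  zero and one; words are lists over 'a.\<close>

type_synonym var = nat
type_synonym 'a word = "'a list"
type_synonym 'a store = "var \<Rightarrow> 'a word"

datatype 'op expr = Var var | Op 'op "'op expr list" | Declass "'op expr" "'op expr"

datatype 'op stmt = Skip | Assign var "'op expr" | Seq "'op stmt" "'op stmt"
  | If "'op expr" "'op stmt" "'op stmt" | While "'op expr" "'op stmt" | Break "'op expr"

datatype 'op prog = Prog (params: "var list") (body: "'op stmt") (ret: var)

definition bool_w :: "'a \<Rightarrow> 'a \<Rightarrow> bool \<Rightarrow> 'a word" where
  "bool_w zero one b = (if b then [one] else [zero])"

definition std_ops :: "'a \<Rightarrow> 'a \<Rightarrow> ('op \<Rightarrow> nat) \<Rightarrow> ('op \<Rightarrow> 'a word list \<Rightarrow> 'a word) \<Rightarrow> bool" where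
  "std_ops zero one ar sem \<longleftrightarrow>
     (\<exists>op. ar op = 2 \<and> (\<forall>u v. sem op [u, v] = bool_w zero one (u = v))) \<and>
     (\<exists>op. ar op = 2 \<and> (\<forall>u v. sem op [u, v] = bool_w zero one (length u < length v))) \<and>
     (\<exists>op. ar op = 2 \<and> (\<forall>u v. sem op [u, v] = bool_w zero one (length u \<le> length v))) \<and>
     (\<exists>op. ar op = 0 \<and> sem op [] = [zero]) \<and>
     (\<exists>op. ar op = 1 \<and> (\<forall>w. sem op [w] = one # w)) \<and>
     (\<exists>op. ar op = 1 \<and> (\<forall>w. sem op [w] = tl w)) \<and>
     (\<exists>op. ar op = 1 \<and> (\<forall>w. sem op [w] = bool_w zero one (w \<noteq> [one]))) \<and>
     (\<exists>op. ar op = 2 \<and> (\<forall>u v. sem op [u, v] = bool_w zero one (u = [one] \<and> v = [one]))) \<and>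
     (\<exists>op. ar op = 2 \<and> (\<forall>u v. sem op [u, v] = bool_w zero one (u = [one] \<or> v = [one])))"

primrec eval :: "'a \<Rightarrow> ('op \<Rightarrow> 'a word list \<Rightarrow> 'a word) \<Rightarrow> 'a store \<Rightarrow> 'op expr \<Rightarrow> 'a word" where
  "eval one sem \<mu> (Var x) = \<mu> x"
| "eval one sem \<mu> (Op op es) = sem op (map (eval one sem \<mu>) es)"
| "eval one sem \<mu> (Declass e1 e2) =
     replicate (min (length (eval one sem \<mu> e1)) (length (eval one sem \<mu> e2))) one"

text \<open>Big-step evaluation; the flag True stands for \<open>\<top>\<close>, False for \<open>\<bottom>\<close>.\<close>
inductive big_step :: "'a \<Rightarrow> ('op \<Rightarrow> 'a word list \<Rightarrow> 'a word)
    \<Rightarrow> 'a store \<times> 'op stmt \<Rightarrow> bool \<times> 'a store \<Rightarrow> bool"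
  for one sem where
  BSkip: "big_step one sem (\<mu>, Skip) (True, \<mu>)"
| BAssign: "big_step one sem (\<mu>, Assign x e) (True, \<mu>(x := eval one sem \<mu> e))"
| BSeqBot: "big_step one sem (\<mu>, s1) (False, \<mu>1) \<Longrightarrow> big_step one sem (\<mu>, Seq s1 s2) (False, \<mu>1)"
| BSeq: "big_step one sem (\<mu>, s1) (True, \<mu>1) \<Longrightarrow> big_step one sem (\<mu>1, s2) (b, \<mu>2)
          \<Longrightarrow> big_step one sem (\<mu>, Seq s1 s2) (b, \<mu>2)"
| BIfT: "eval one sem \<mu> e = [one] \<Longrightarrow> big_step one sem (\<mu>, s1) (b, \<mu>')
          \<Longrightarrow> big_step one sem (\<mu>, If e s1 s2) (b, \<mu>')"
| BIfF: "eval one sem \<mu> e \<noteq> [one] \<Longrightarrow> big_step one sem (\<mu>, s2) (b, \<mu>')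
          \<Longrightarrow> big_step one sem (\<mu>, If e s1 s2) (b, \<mu>')"
| BWhileF: "eval one sem \<mu> e \<noteq> [one] \<Longrightarrow> big_step one sem (\<mu>, While e s) (True, \<mu>)"
| BWhileT: "eval one sem \<mu> e = [one] \<Longrightarrow> big_step one sem (\<mu>, Seq s (While e s)) (b, \<mu>')
          \<Longrightarrow> big_step one sem (\<mu>, While e s) (True, \<mu>')"
| BBreakT: "eval one sem \<mu> e = [one] \<Longrightarrow> big_step one sem (\<mu>, Break e) (False, \<mu>)"
| BBreakF: "eval one sem \<mu> e \<noteq> [one] \<Longrightarrow> big_step one sem (\<mu>, Break e) (True, \<mu>)"

text \<open>Evaluation trees (possibly infinite, for diverging runs) are described by their
  immediate-subtree relation on root configurations: \<open>tree_child c c'\<close> iff the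
  (unique) evaluation tree with root c has an immediate statement subtree with root c'.
  By determinism, \<open>\<pi>_c' \<sqsubseteq> \<pi>_c\<close> iff \<open>tree_child\<^sup>*\<^sup>* c c'\<close>
  and \<open>\<pi>_c' \<sqsubset> \<pi>_c\<close> iff \<open>tree_child\<^sup>+\<^sup>+ c c'\<close>.\<close>
inductive tree_child :: "'a \<Rightarrow> ('op \<Rightarrow> 'a word list \<Rightarrow> 'a word)
    \<Rightarrow> 'a store \<times> 'op stmt \<Rightarrow> 'a store \<times> 'op stmt \<Rightarrow> bool"
  for one sem where
  CSeq1: "tree_child one sem (\<mu>, Seq s1 s2) (\<mu>, s1)"
| CSeq2: "big_step one sem (\<mu>, s1) (True, \<mu>1) \<Longrightarrow> tree_child one sem (\<mu>, Seq s1 s2) (\<mu>1, s2)"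
| CIfT: "eval one sem \<mu> e = [one] \<Longrightarrow> tree_child one sem (\<mu>, If e s1 s2) (\<mu>, s1)"
| CIfF: "eval one sem \<mu> e \<noteq> [one] \<Longrightarrow> tree_child one sem (\<mu>, If e s1 s2) (\<mu>, s2)"
| CWhile: "eval one sem \<mu> e = [one] \<Longrightarrow> tree_child one sem (\<mu>, While e s) (\<mu>, Seq s (While e s))"

definition init_store :: "var list \<Rightarrow> 'a word list \<Rightarrow> 'a store" where
  "init_store xs ws = foldl (\<lambda>\<mu> (x, w). \<mu>(x := w)) (\<lambda>_. []) (zip xs ws)"

text \<open>\<open>computes P ws w\<close>: \<open>\<lbrakk>P\<rbrakk>(ws) = w\<close>.\<close>
definition computes :: "'a \<Rightarrow> ('op \<Rightarrow> 'a word list \<Rightarrow> 'a word) \<Rightarrow> 'op prog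
    \<Rightarrow> 'a word list \<Rightarrow> 'a word \<Rightarrow> bool" where
  "computes one sem P ws w \<longleftrightarrow> length ws = length (params P) \<and>
     (\<exists>b \<mu>'. big_step one sem (init_store (params P) ws, body P) (b, \<mu>') \<and> \<mu>' (ret P) = w)"

definition TERM_progs :: "'a \<Rightarrow> ('op \<Rightarrow> 'a word list \<Rightarrow> 'a word) \<Rightarrow> 'op prog set" where
  "TERM_progs one sem = {P. \<forall>ws. length ws = length (params P) \<longrightarrow> (\<exists>w. computes one sem P ws w)}"

definition same_fun :: "'a \<Rightarrow> ('op \<Rightarrow> 'a word list \<Rightarrow> 'a word) \<Rightarrow> 'op prog \<Rightarrow> 'op prog \<Rightarrow> bool" where
  "same_fun one sem P Q \<longleftrightarrow> (\<forall>ws w. computes one sem P ws w \<longleftrightarrow> computes one sem Q ws w)"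

primrec U :: "'op expr \<Rightarrow> var set" where
  "U (Var x) = {x}"
| "U (Op op es) = \<Union> (set (map U es))"
| "U (Declass e1 e2) = U e2"

definition AP :: "'a \<Rightarrow> ('op \<Rightarrow> 'a word list \<Rightarrow> 'a word) \<Rightarrow> 'op prog set" where
  "AP one sem = {P. \<not> (\<exists>\<mu> \<mu>' \<mu>'' e s.
      (tree_child one sem)\<^sup>*\<^sup>* (\<mu>, body P) (\<mu>', While e s) \<and>
      (tree_child one sem)\<^sup>+\<^sup>+ (\<mu>', While e s) (\<mu>'', While e s) \<and>
      (\<forall>x \<in> U e. \<mu>' x = \<mu>'' x))}"

definition subword :: "'a word \<Rightarrow> 'a word \<Rightarrow> bool" where
  "subword v w \<longleftrightarrow> (\<exists>u u'. w = u @ v @ u')"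

definition maxlen :: "'a word list \<Rightarrow> nat" where
  "maxlen ws = Max (insert 0 (length ` set ws))"

definition op_neutral :: "'a \<Rightarrow> 'a \<Rightarrow> ('op \<Rightarrow> nat) \<Rightarrow> ('op \<Rightarrow> 'a word list \<Rightarrow> 'a word) \<Rightarrow> 'op \<Rightarrow> bool" where
  "op_neutral zero one ar sem op \<longleftrightarrow>
     (\<forall>ws. length ws = ar op \<longrightarrow> sem op ws \<in> {[zero], [one]}) \<or>
     (\<exists>i < ar op. \<forall>ws. length ws = ar op \<longrightarrow> subword (sem op ws) (ws ! i))"

definition op_positive :: "('op \<Rightarrow> nat) \<Rightarrow> ('op \<Rightarrow> 'a word list \<Rightarrow> 'a word) \<Rightarrow> 'op \<Rightarrow> bool" where
  "op_positive ar sem op \<longleftrightarrow>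
     (\<exists>c::nat. \<forall>ws. length ws = ar op \<longrightarrow> length (sem op ws) \<le> maxlen ws + c)"

definition op_polynomial :: "('op \<Rightarrow> nat) \<Rightarrow> ('op \<Rightarrow> 'a word list \<Rightarrow> 'a word) \<Rightarrow> 'op \<Rightarrow> bool" where
  "op_polynomial ar sem op \<longleftrightarrow>
     (\<exists>p::nat poly. \<forall>ws. length ws = ar op \<longrightarrow> length (sem op ws) \<le> poly p (maxlen ws))"

text \<open>Polynomial-time computability via deterministic single-tape Turing machines.
  Tape symbols are naturals: 0 = blank, 1 = separator, letter a is \<open>to_nat a + 2\<close>.
  A machine is a transition function \<open>\<delta> q s = (q', s', move)\<close>; state 0 is initial,
  state 1 is halting. Configurations are (state, tape, head position).\<close>

type_synonym tm = "nat \<Rightarrow> nat \<Rightarrow> nat \<times> nat \<times> int"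

definition tm_step :: "tm \<Rightarrow> nat \<times> (int \<Rightarrow> nat) \<times> int \<Rightarrow> nat \<times> (int \<Rightarrow> nat) \<times> int" where
  "tm_step \<delta> c = (case c of (q, t, h) \<Rightarrow>
     if q = 1 then c else (case \<delta> q (t h) of (q', s', m) \<Rightarrow> (q', t(h := s'), h + m)))"

definition sym :: "'a::countable \<Rightarrow> nat" where
  "sym a = to_nat a + 2"

definition enc_input :: "'a::countable word list \<Rightarrow> nat list" where
  "enc_input ws = concat (map (\<lambda>w. map sym w @ [1]) ws)"

definition tape_of :: "nat list \<Rightarrow> int \<Rightarrow> nat" where
  "tape_of L i = (if 0 \<le> i \<and> i < int (length L) then L ! nat i else 0)"

definition ptime_computable :: "nat \<Rightarrow> ('a::countable word list \<Rightarrow> 'a word) \<Rightarrow> bool" where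
  "ptime_computable k f \<longleftrightarrow>
     (\<exists>(\<delta>::tm) (Q::nat) (S::nat) (p::nat poly).
        1 < Q \<and> (\<forall>a::'a. sym a < S) \<and>
        (\<forall>q < Q. \<forall>s < S. case \<delta> q s of (q', s', m) \<Rightarrow> q' < Q \<and> s' < S \<and> m \<in> {-1, 0, 1}) \<and>
        (\<forall>ws. length ws = k \<longrightarrow>
           (\<exists>n \<le> poly p (length (enc_input ws)).
              case (tm_step \<delta> ^^ n) (0, tape_of (enc_input ws), 0) of (q, t, h) \<Rightarrow>
                q = 1 \<and> (\<forall>i < length (f ws). t (h + int i) = sym (f ws ! i)) \<and>
                t (h + int (length (f ws))) = 0)))"

type_synonym 'op openv = "'op \<Rightarrow> (nat \<Rightarrow> nat \<Rightarrow> nat list set) option"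

text \<open>\<open>ety \<Gamma> \<Delta> ti to e \<tau>\<close> is \<open>\<Gamma>,\<Delta> \<turnstile>^ti_to e : \<tau>\<close>; a tuple
  \<open>\<tau>1 \<rightarrow> ... \<rightarrow> \<tau>(k+1)\<close> is the list [\<tau>1,...,\<tau>(k+1)].\<close>
inductive ety :: "('op \<Rightarrow> nat) \<Rightarrow> (var \<Rightarrow> nat) \<Rightarrow> 'op openv \<Rightarrow> nat \<Rightarrow> nat \<Rightarrow> 'op expr \<Rightarrow> nat \<Rightarrow> bool"
  for ar \<Gamma> \<Delta> where
  TVar: "\<Gamma> x = \<tau> \<Longrightarrow> ety ar \<Gamma> \<Delta> ti to (Var x) \<tau>"
| TOp: "\<Delta> op = Some D \<Longrightarrow> ts \<in> D ti to \<Longrightarrow> length es = ar op \<Longrightarrow> length ts = Suc (length es) \<Longrightarrow>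
        (\<forall>i < length es. ety ar \<Gamma> \<Delta> ti to (es ! i) (ts ! i)) \<Longrightarrow>
        ety ar \<Gamma> \<Delta> ti to (Op op es) (ts ! length es)"
| TDcl: "ety ar \<Gamma> \<Delta> ti to e1 \<tau>1 \<Longrightarrow> ety ar \<Gamma> \<Delta> ti to e2 to \<Longrightarrow> \<tau>1 \<le> \<tau> \<Longrightarrow> \<tau> \<le> to \<Longrightarrow>
        ety ar \<Gamma> \<Delta> ti to (Declass e1 e2) \<tau>"

inductive sty :: "('op \<Rightarrow> nat) \<Rightarrow> (var \<Rightarrow> nat) \<Rightarrow> 'op openv \<Rightarrow> nat \<Rightarrow> nat \<Rightarrow> 'op stmt \<Rightarrow> nat \<Rightarrow> bool"
  for ar \<Gamma> \<Delta> where
  TSub: "sty ar \<Gamma> \<Delta> ti to s \<tau> \<Longrightarrow> \<tau> \<le> \<tau>' \<Longrightarrow> sty ar \<Gamma> \<Delta> ti to s \<tau>'"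
| TSkip: "sty ar \<Gamma> \<Delta> ti to Skip 0"
| TAsg: "\<Gamma> x = \<tau>1 \<Longrightarrow> ety ar \<Gamma> \<Delta> ti to e \<tau>2 \<Longrightarrow> (to = 0 \<or> \<tau>1 \<le> \<tau>2) \<Longrightarrow>
        sty ar \<Gamma> \<Delta> ti to (Assign x e) \<tau>1"
| TSeq: "sty ar \<Gamma> \<Delta> ti to s1 \<tau> \<Longrightarrow> sty ar \<Gamma> \<Delta> ti to s2 \<tau> \<Longrightarrow> sty ar \<Gamma> \<Delta> ti to (Seq s1 s2) \<tau>"
| TCnd: "ety ar \<Gamma> \<Delta> ti to e \<tau> \<Longrightarrow> sty ar \<Gamma> \<Delta> ti to s1 \<tau> \<Longrightarrow> sty ar \<Gamma> \<Delta> ti to s2 \<tau> \<Longrightarrow>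
        sty ar \<Gamma> \<Delta> ti to (If e s1 s2) \<tau>"
| TWh: "ety ar \<Gamma> \<Delta> \<tau> to e \<tau> \<Longrightarrow> sty ar \<Gamma> \<Delta> \<tau> to s \<tau> \<Longrightarrow> 1 \<le> \<tau> \<Longrightarrow> \<tau> \<le> to \<Longrightarrow>
        sty ar \<Gamma> \<Delta> ti to (While e s) \<tau>"
| TWi: "ety ar \<Gamma> \<Delta> \<tau> \<tau> e \<tau> \<Longrightarrow> sty ar \<Gamma> \<Delta> \<tau> \<tau> s \<tau> \<Longrightarrow> 1 \<le> \<tau> \<Longrightarrow>
        sty ar \<Gamma> \<Delta> 0 0 (While e s) \<tau>"
| TBrk: "ety ar \<Gamma> \<Delta> ti to e \<tau> \<Longrightarrow> ti \<le> \<tau> \<Longrightarrow> sty ar \<Gamma> \<Delta> ti to (Break e) ti"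

definition safe_env :: "'a::countable \<Rightarrow> 'a \<Rightarrow> ('op \<Rightarrow> nat) \<Rightarrow> ('op \<Rightarrow> 'a word list \<Rightarrow> 'a word)
    \<Rightarrow> 'op openv \<Rightarrow> bool" where
  "safe_env zero one ar sem \<Delta> \<longleftrightarrow> (\<forall>op D. \<Delta> op = Some D \<longrightarrow>
     (op_neutral zero one ar sem op \<or> op_positive ar sem op \<or> op_polynomial ar sem op) \<and>
     ptime_computable (ar op) (sem op) \<and>
     (\<forall>ti to ts. ts \<in> D ti to \<longrightarrow> length ts = Suc (ar op) \<and>
        (op_neutral zero one ar sem op \<longrightarrow> (\<forall>i < ar op. ts ! ar op \<le> ts ! i)) \<and>
        (op_positive ar sem op \<and> \<not> op_neutral zero one ar sem op \<longrightarrow>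
            (\<forall>i < ar op. ts ! ar op \<le> ts ! i) \<and> (ts ! ar op < ti \<or> ts ! ar op = 0)) \<and>
        (op_polynomial ar sem op \<and> \<not> op_positive ar sem op \<longrightarrow> to = 0)))"

definition SAFE :: "'a::countable \<Rightarrow> 'a \<Rightarrow> ('op \<Rightarrow> nat) \<Rightarrow> ('op \<Rightarrow> 'a word list \<Rightarrow> 'a word)
    \<Rightarrow> 'op prog set" where
  "SAFE zero one ar sem = {P. \<exists>\<Gamma> \<Delta> \<tau>. safe_env zero one ar sem \<Delta> \<and> sty ar \<Gamma> \<Delta> 0 0 (body P) \<tau>}"

end

theory Submission
  imports Defs "HOL-Library.FuncSet"
begin

text \<open>Termination: a diverging run passes some loop \<open>While e a\<close> of level \<open>\<tau>\<close>
  infinitely often. Inside the loop only neutral operators and declassification act on data of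
  level \<open>\<ge> \<tau>\<close>, so from the first visit on these variables, which include those the guard
  reads, keep values among finitely many words. Two visits then agree on the guard variables,
  contradicting aperiodicity.

  Strictness: by the same observation the states of successive iterations of a loop of level
  \<open>\<tau>\<close> range over a set of guard valuations of polynomial size in the level-\<open>\<tau>\<close> data,
  and aperiodicity makes them pairwise different, so each loop iterates polynomially often. An
  induction over the levels then bounds the output length of a safe aperiodic program
  polynomially in its input length, whereas a terminating program with a doubling loop outputs
  \<open>1 ^ 2 ^ n\<close> on inputs of length \<open>n\<close>.\<close>

section \<open>Polynomial bounds and counting\<close>

definition poly_bounded :: "(nat \<Rightarrow> nat) \<Rightarrow> bool" where
  "poly_bounded f \<longleftrightarrow> mono f \<and> (\<exists>c k. \<forall>y. f y \<le> c * (y + 1) ^ k)"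

lemma poly_bounded_mono: "poly_bounded f \<Longrightarrow> a \<le> b \<Longrightarrow> f a \<le> f b"
  unfolding poly_bounded_def mono_def by blast

lemma poly_bounded_const: "poly_bounded (\<lambda>y. c)"
proof -
  have "\<forall>y. c \<le> c * (y + 1) ^ 0" by simp
  then show ?thesis unfolding poly_bounded_def by (blast intro: monoI)
qed

lemma poly_bounded_id: "poly_bounded (\<lambda>y. y)"
  unfolding poly_bounded_def by (auto intro!: monoI exI[of _ 1])

lemma poly_bounded_Suc_power: "poly_bounded (\<lambda>y. (y + 1) ^ k)"
proof -
  have "\<forall>y. (y + 1 :: nat) ^ k \<le> 1 * (y + 1) ^ k" by simp
  moreover have "mono (\<lambda>y. (y + 1 :: nat) ^ k)" by (rule monoI) (simp add: power_mono)
  ultimately show ?thesis unfolding poly_bounded_def by blast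
qed

lemma poly_bounded_add:
  assumes "poly_bounded f" "poly_bounded g"
  shows "poly_bounded (\<lambda>y. f y + g y)"
proof -
  obtain c k where f: "\<And>y. f y \<le> c * (y + 1) ^ k" using assms(1) unfolding poly_bounded_def by blast
  obtain d l where g: "\<And>y. g y \<le> d * (y + 1) ^ l" using assms(2) unfolding poly_bounded_def by blast
  have "f y + g y \<le> (c + d) * (y + 1) ^ max k l" for y
  proof -
    have "(y + 1) ^ k \<le> (y + 1) ^ max k l" "(y + 1) ^ l \<le> (y + 1) ^ max k l"
      by (auto intro: power_increasing)
    then have "f y \<le> c * (y + 1) ^ max k l" "g y \<le> d * (y + 1) ^ max k l"
      using f[of y] g[of y] by (meson le_trans mult_le_mono2)+
    then show ?thesis by (simp add: add_mult_distrib)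
  qed
  moreover have "mono (\<lambda>y. f y + g y)"
    using assms unfolding poly_bounded_def mono_def by (simp add: add_mono)
  ultimately show ?thesis unfolding poly_bounded_def by blast
qed

lemma poly_bounded_mult:
  assumes "poly_bounded f" "poly_bounded g"
  shows "poly_bounded (\<lambda>y. f y * g y)"
proof -
  obtain c k where f: "\<And>y. f y \<le> c * (y + 1) ^ k" using assms(1) unfolding poly_bounded_def by blast
  obtain d l where g: "\<And>y. g y \<le> d * (y + 1) ^ l" using assms(2) unfolding poly_bounded_def by blast
  have "f y * g y \<le> (c * d) * (y + 1) ^ (k + l)" for y
    using mult_le_mono[OF f[of y] g[of y]] by (simp add: power_add mult_ac)
  moreover have "mono (\<lambda>y. f y * g y)"
    using assms unfolding poly_bounded_def mono_def by (simp add: mult_le_mono)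
  ultimately show ?thesis unfolding poly_bounded_def by blast
qed

lemma poly_bounded_comp:
  assumes "poly_bounded f" "poly_bounded g"
  shows "poly_bounded (\<lambda>y. f (g y))"
proof -
  obtain c k where f: "\<And>y. f y \<le> c * (y + 1) ^ k" using assms(1) unfolding poly_bounded_def by blast
  obtain d l where g: "\<And>y. g y \<le> d * (y + 1) ^ l" using assms(2) unfolding poly_bounded_def by blast
  have "f (g y) \<le> (c * (d + 1) ^ k) * (y + 1) ^ (l * k)" for y
  proof -
    have "1 \<le> (y + 1) ^ l" "(d + 1) * (y + 1) ^ l = d * (y + 1) ^ l + (y + 1) ^ l"
      by (simp_all add: algebra_simps)
    then have "g y + 1 \<le> (d + 1) * (y + 1) ^ l"
      using g[of y] by linarith
    then have "(g y + 1) ^ k \<le> ((d + 1) * (y + 1) ^ l) ^ k" by (rule power_mono) simp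
    then have "f (g y) \<le> c * ((d + 1) * (y + 1) ^ l) ^ k"
      using f[of "g y"] by (meson le_trans mult_le_mono2)
    also have "\<dots> = (c * (d + 1) ^ k) * (y + 1) ^ (l * k)"
      by (simp only: power_mult_distrib power_mult[symmetric] mult.commute[of l k] mult.assoc)
    finally show ?thesis .
  qed
  moreover have "mono (\<lambda>y. f (g y))" using assms unfolding poly_bounded_def mono_def by simp
  ultimately show ?thesis unfolding poly_bounded_def by blast
qed

lemma poly_bounded_sum:
  "finite A \<Longrightarrow> (\<And>i. i \<in> A \<Longrightarrow> poly_bounded (g i)) \<Longrightarrow> poly_bounded (\<lambda>y. \<Sum>i\<in>A. g i y)"
  by (induction rule: finite_induct) (auto intro: poly_bounded_add poly_bounded_const)

lemma poly_bounded_power: "poly_bounded f \<Longrightarrow> poly_bounded (\<lambda>y. f y ^ n)"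
  by (induction n) (auto intro: poly_bounded_mult poly_bounded_const)

lemma poly_bounded_poly:
  fixes p :: "nat poly"
  obtains h where "poly_bounded h" "\<And>z. poly p z \<le> h z"
proof
  show "poly_bounded (\<lambda>z. \<Sum>i\<le>degree p. coeff p i * (z + 1) ^ i)"
    by (intro poly_bounded_sum poly_bounded_mult poly_bounded_const poly_bounded_Suc_power) auto
  show "poly p z \<le> (\<Sum>i\<le>degree p. coeff p i * (z + 1) ^ i)" for z
    unfolding poly_altdef by (intro sum_mono mult_le_mono2 power_mono) auto
qed

text \<open>The restrictions of the \<open>g i\<close> to \<open>X\<close> are distinct elements of \<open>X \<rightarrow>\<^sub>E S\<close>.\<close>
lemma card_le_if_restrictions_differ:
  assumes "finite X" "finite S" "\<And>i x. i \<in> I \<Longrightarrow> x \<in> X \<Longrightarrow> g i x \<in> S"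
    and "\<And>i j. i \<in> I \<Longrightarrow> j \<in> I \<Longrightarrow> i \<noteq> j \<Longrightarrow> \<exists>x\<in>X. g i x \<noteq> g j x"
  shows "finite I" "card I \<le> card S ^ card X"
proof -
  let ?r = "\<lambda>i. restrict (g i) X"
  have inj: "inj_on ?r I"
  proof (rule inj_onI, rule ccontr)
    fix i j assume "i \<in> I" "j \<in> I" "?r i = ?r j" "i \<noteq> j"
    have "g i x = g j x" if "x \<in> X" for x
    proof -
      from \<open>?r i = ?r j\<close> have "?r i x = ?r j x" by (rule fun_cong)
      then show ?thesis using that by simp
    qed
    then show False using assms(4) \<open>i \<in> I\<close> \<open>j \<in> I\<close> \<open>i \<noteq> j\<close> by blast
  qed
  have sub: "?r ` I \<subseteq> (\<Pi>\<^sub>E x\<in>X. S)" using assms(3) by auto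
  have fin: "finite (\<Pi>\<^sub>E x\<in>X. S)" using assms(1,2) by (simp add: finite_PiE)
  show "finite I" using finite_imageD[OF finite_subset[OF sub fin] inj] .
  have "card I = card (?r ` I)" using card_image[OF inj] by simp
  also have "\<dots> \<le> card (\<Pi>\<^sub>E x\<in>X. S)" using card_mono[OF fin sub] .
  also have "\<dots> = card S ^ card X" using assms(1) by (simp add: card_PiE)
  finally show "card I \<le> card S ^ card X" .
qed

lemma square_le_two_power: "4 \<le> j \<Longrightarrow> j ^ 2 \<le> (2::nat) ^ j"
proof (induction j rule: dec_induct)
  case (step j)
  have "4 * j \<le> j * j" using step(1) by (rule mult_le_mono1)
  then have "2 * j + 1 \<le> j ^ 2" using step(1) unfolding power2_eq_square by linarith
  have "Suc j ^ 2 = j ^ 2 + 2 * j + 1" by (simp add: power2_eq_square)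
  also have "\<dots> \<le> 2 * j ^ 2" using \<open>2 * j + 1 \<le> j ^ 2\<close> by simp
  also have "\<dots> \<le> 2 * 2 ^ j" using step by simp
  finally show ?case by simp
qed simp

lemma linear_less_two_power: "\<exists>j. a * j + b < (2::nat) ^ j"
proof
  let ?j = "a + b + 4"
  have "a * ?j + b < ?j ^ 2" by (simp add: algebra_simps power2_eq_square)
  also have "\<dots> \<le> 2 ^ ?j" by (rule square_le_two_power) simp
  finally show "a * ?j + b < 2 ^ ?j" .
qed

text \<open>Doubling the argument multiplies \<open>F n = c * (n + 1) ^ k\<close> by at most \<open>2 ^ k\<close>, so
  \<open>F (2 ^ j) \<le> 2 ^ (k * j) * F 1\<close>, which is below \<open>2 ^ 2 ^ j\<close> for large \<open>j\<close>.\<close>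
lemma poly_less_two_power: "\<exists>n. c * (n + 1) ^ k < (2::nat) ^ n"
proof -
  define F where "F n = c * (n + 1) ^ k" for n
  have F_double: "F (2 * n) \<le> 2 ^ k * F n" for n
  proof -
    have "(2 * n + 1) ^ k \<le> (2 * (n + 1)) ^ k" by (rule power_mono) auto
    also have "\<dots> = 2 ^ k * (n + 1) ^ k" by (simp only: power_mult_distrib)
    finally show ?thesis unfolding F_def by (simp add: mult_le_mono2 mult.left_commute)
  qed
  have F_power: "F (2 ^ j) \<le> 2 ^ (k * j) * F 1" for j
  proof (induction j)
    case (Suc j)
    have "F (2 ^ Suc j) \<le> 2 ^ k * F (2 ^ j)" using F_double[of "2 ^ j"] by simp
    also have "\<dots> \<le> 2 ^ k * (2 ^ (k * j) * F 1)" using Suc by simp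
    finally show ?case by (simp add: power_add mult_ac)
  qed simp
  obtain j where j: "k * j + F 1 < 2 ^ j" using linear_less_two_power by blast
  have "F (2 ^ j) \<le> 2 ^ (k * j) * F 1" by (rule F_power)
  also have "\<dots> < 2 ^ (k * j) * 2 ^ F 1" by simp
  also have "\<dots> = 2 ^ (k * j + F 1)" by (simp add: power_add)
  also have "\<dots> \<le> 2 ^ (2 ^ j)" using j by (intro power_increasing) auto
  finally show ?thesis unfolding F_def by blast
qed

text \<open>Read \<open>x i k\<close> as the size of the data of level \<open>k\<close> after \<open>i\<close> iterations of a loop:
  one iteration enlarges level \<open>k\<close> by at most \<open>p\<close> of the size of level \<open>k + 1\<close>, and the
  levels from \<open>K\<close> on never exceed \<open>C\<close>. Descending from level \<open>K\<close>, the increments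
  accumulate as the nested bound \<open>iter_bound\<close>.\<close>
fun iter_bound :: "(nat \<Rightarrow> nat) \<Rightarrow> nat \<Rightarrow> nat \<Rightarrow> nat \<Rightarrow> nat" where
  "iter_bound p 0 i Y = Y"
| "iter_bound p (Suc d) i Y = Y + i * p (Y + iter_bound p d i Y)"

lemma iter_bound_ge: "Y \<le> iter_bound p d i Y"
  by (cases d) auto

lemma iter_bound_mono: "mono p \<Longrightarrow> i \<le> i' \<Longrightarrow> iter_bound p d i Y \<le> iter_bound p d i' Y"
proof (induction d)
  case (Suc d)
  then have "p (Y + iter_bound p d i Y) \<le> p (Y + iter_bound p d i' Y)" by (simp add: monoD)
  then show ?case using Suc by (simp add: mult_le_mono)
qed simp

lemma iterated_level_bound:
  fixes x :: "nat \<Rightarrow> nat \<Rightarrow> nat"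
  assumes p: "mono p"
    and step: "\<And>i k. i < m \<Longrightarrow> x (Suc i) k \<le> x i k + p (x i (Suc k))"
    and top: "\<And>i k. i \<le> m \<Longrightarrow> K \<le> k \<Longrightarrow> x i k \<le> C"
    and "C \<le> Y"
  shows "K \<le> k + d \<Longrightarrow> i \<le> m \<Longrightarrow> (\<And>k'. k < k' \<Longrightarrow> x 0 k' \<le> Y)
    \<Longrightarrow> x i k \<le> x 0 k + iter_bound p d i Y"
proof (induction d arbitrary: k i)
  case 0
  then show ?case using top[of i k] \<open>C \<le> Y\<close> by simp
next
  case (Suc d)
  show ?case
  proof (cases "K \<le> k")
    case True
    then show ?thesis
      using top[OF \<open>i \<le> m\<close> True] \<open>C \<le> Y\<close> iter_bound_ge[of Y p "Suc d" i] by linarith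
  next
    case False
    have next_level: "x i' (Suc k) \<le> Y + iter_bound p d i' Y" if "i' \<le> m" for i'
    proof -
      have "x i' (Suc k) \<le> x 0 (Suc k) + iter_bound p d i' Y"
        by (rule Suc.IH) (use Suc.prems that in auto)
      moreover have "x 0 (Suc k) \<le> Y" using Suc.prems(3) by simp
      ultimately show ?thesis by simp
    qed
    have "x j k \<le> x 0 k + j * p (Y + iter_bound p d j Y)" if "j \<le> i" for j
      using that
    proof (induction j)
      case (Suc j)
      have jm: "j < m" using Suc.prems \<open>i \<le> m\<close> by simp
      have "p (Y + iter_bound p d j Y) \<le> p (Y + iter_bound p d (Suc j) Y)"
        using iter_bound_mono[OF p, of j "Suc j" d Y] p by (simp add: monoD)
      then have "j * p (Y + iter_bound p d j Y) \<le> j * p (Y + iter_bound p d (Suc j) Y)"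
        by (rule mult_le_mono2)
      moreover have "p (x j (Suc k)) \<le> p (Y + iter_bound p d (Suc j) Y)"
      proof -
        have "x j (Suc k) \<le> Y + iter_bound p d (Suc j) Y"
          using next_level[of j] jm iter_bound_mono[OF p, of j "Suc j" d Y] by simp
        then show ?thesis using p by (simp add: monoD)
      qed
      ultimately have "x (Suc j) k \<le> x 0 k + (p (Y + iter_bound p d (Suc j) Y)
          + j * p (Y + iter_bound p d (Suc j) Y))"
        using step[OF jm, of k] Suc.IH[OF Suc_leD[OF Suc.prems]] by linarith
      then show ?case by simp
    qed simp
    from this[of i] show ?thesis by simp
  qed
qed

lemma poly_bounded_iter_bound:
  assumes "poly_bounded p" "poly_bounded q"
  shows "poly_bounded (\<lambda>y. iter_bound p d (q y) (y + 1))"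
proof -
  have Suc_y: "poly_bounded (\<lambda>y. y + 1)"
    by (intro poly_bounded_add poly_bounded_id poly_bounded_const)
  show ?thesis
  proof (induction d)
    case 0
    show ?case using Suc_y by simp
  next
    case (Suc d)
    have "poly_bounded (\<lambda>y. q y * p (y + 1 + iter_bound p d (q y) (y + 1)))"
      by (intro poly_bounded_mult assms poly_bounded_comp[OF assms(1)] poly_bounded_add Suc_y Suc)
    then show ?case using poly_bounded_add[OF Suc_y] by simp
  qed
qed


section \<open>Syntax, typing inversion and evaluation trees\<close>

primrec evars :: "'op expr \<Rightarrow> var set" where
  "evars (Var x) = {x}"
| "evars (Op op es) = \<Union> (set (map evars es))"
| "evars (Declass e1 e2) = evars e1 \<union> evars e2"

primrec svars :: "'op stmt \<Rightarrow> var set" where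
  "svars Skip = {}"
| "svars (Assign x e) = insert x (evars e)"
| "svars (Seq a b) = svars a \<union> svars b"
| "svars (If e a b) = evars e \<union> svars a \<union> svars b"
| "svars (While e a) = evars e \<union> svars a"
| "svars (Break e) = evars e"

lemma finite_evars: "finite (evars e)"
  by (induction e) auto

lemma finite_svars: "finite (svars s)"
  by (induction s) (auto simp: finite_evars)

lemma U_subset_evars: "U e \<subseteq> evars e"
  by (induction e) auto

lemma finite_U: "finite (U e)"
  using finite_subset[OF U_subset_evars finite_evars] .

primrec substmts :: "'op stmt \<Rightarrow> 'op stmt set" where
  "substmts Skip = {Skip}"
| "substmts (Assign x e) = {Assign x e}"
| "substmts (Seq a b) = insert (Seq a b) (substmts a \<union> substmts b)"
| "substmts (If e a b) = insert (If e a b) (substmts a \<union> substmts b)"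
| "substmts (While e a) = insert (While e a) (substmts a)"
| "substmts (Break e) = {Break e}"

lemma finite_substmts: "finite (substmts s)"
  by (induction s) auto

lemma substmts_refl: "s \<in> substmts s"
  by (cases s) auto

lemma substmts_trans: "t \<in> substmts s \<Longrightarrow> substmts t \<subseteq> substmts s"
  by (induction s) auto

text \<open>The statements that can occur in the evaluation tree of \<open>s\<close>.\<close>
definition unfoldings :: "'op stmt \<Rightarrow> 'op stmt set" where
  "unfoldings s = substmts s \<union> {Seq a (While e a) | e a. While e a \<in> substmts s}"

lemma finite_unfoldings: "finite (unfoldings s)"
proof -
  have "{Seq a (While e a) | e a. While e a \<in> substmts s}
      \<subseteq> (\<lambda>t. case t of While e a \<Rightarrow> Seq a (While e a) | _ \<Rightarrow> t) ` substmts s"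
    by force
  then show ?thesis
    unfolding unfoldings_def using finite_substmts finite_subset by blast
qed

lemma tree_child_unfoldings:
  assumes "tree_child one sem c c'" "snd c \<in> unfoldings b"
  shows "snd c' \<in> unfoldings b"
  using assms
proof (cases rule: tree_child.cases)
  case (CSeq1 \<mu> s1 s2)
  then show ?thesis
    using assms(2) substmts_trans[of "Seq s1 s2" b] substmts_trans[of "While _ s1" b]
      substmts_refl[of s1]
    unfolding unfoldings_def by auto
qed (use assms(2) substmts_trans substmts_refl in \<open>fastforce simp: unfoldings_def\<close>)+

lemma tree_child_svars: "tree_child one sem c c' \<Longrightarrow> svars (snd c') \<subseteq> svars (snd c)"
  by (cases rule: tree_child.cases) auto

lemma tree_child_size:
  "tree_child one sem c c' \<Longrightarrow> \<nexists>e a. snd c = While e a \<Longrightarrow> size (snd c') < size (snd c)"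
  by (cases rule: tree_child.cases) auto

lemma sty_SeqE:
  assumes "sty ar \<Gamma> \<Delta> ti to (Seq s1 s2) \<sigma>"
  obtains \<sigma>' where "\<sigma>' \<le> \<sigma>" "sty ar \<Gamma> \<Delta> ti to s1 \<sigma>'" "sty ar \<Gamma> \<Delta> ti to s2 \<sigma>'"
proof -
  have "\<exists>\<sigma>'\<le>\<sigma>. sty ar \<Gamma> \<Delta> ti to s1 \<sigma>' \<and> sty ar \<Gamma> \<Delta> ti to s2 \<sigma>'"
    if "sty ar \<Gamma> \<Delta> ti to s \<sigma>" "s = Seq s1 s2" for s
    using that by (induction rule: sty.induct) (auto intro: le_trans)
  then show ?thesis using assms that by blast
qed

lemma sty_IfE:
  assumes "sty ar \<Gamma> \<Delta> ti to (If e s1 s2) \<sigma>"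
  obtains \<sigma>' where "\<sigma>' \<le> \<sigma>" "ety ar \<Gamma> \<Delta> ti to e \<sigma>'"
    "sty ar \<Gamma> \<Delta> ti to s1 \<sigma>'" "sty ar \<Gamma> \<Delta> ti to s2 \<sigma>'"
proof -
  have "\<exists>\<sigma>'\<le>\<sigma>. ety ar \<Gamma> \<Delta> ti to e \<sigma>' \<and> sty ar \<Gamma> \<Delta> ti to s1 \<sigma>' \<and> sty ar \<Gamma> \<Delta> ti to s2 \<sigma>'"
    if "sty ar \<Gamma> \<Delta> ti to s \<sigma>" "s = If e s1 s2" for s
    using that by (induction rule: sty.induct) (auto intro: le_trans)
  then show ?thesis using assms that by blast
qed

lemma sty_AssignE:
  assumes "sty ar \<Gamma> \<Delta> ti to (Assign x e) \<sigma>"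
  obtains \<tau> where "\<Gamma> x \<le> \<sigma>" "ety ar \<Gamma> \<Delta> ti to e \<tau>" "to = 0 \<or> \<Gamma> x \<le> \<tau>"
proof -
  have "\<exists>\<tau>. \<Gamma> x \<le> \<sigma> \<and> ety ar \<Gamma> \<Delta> ti to e \<tau> \<and> (to = 0 \<or> \<Gamma> x \<le> \<tau>)"
    if "sty ar \<Gamma> \<Delta> ti to s \<sigma>" "s = Assign x e" for s
    using that by (induction rule: sty.induct) (auto intro: le_trans)
  then show ?thesis using assms that by blast
qed

text \<open>\<open>T' = T\<close> under rule (WH); under rule (WI), where \<open>T = 0\<close>, \<open>T'\<close> is the loop level.\<close>
lemma sty_WhileE:
  assumes "sty ar \<Gamma> \<Delta> ti T (While e a) \<sigma>"
  obtains \<tau> T' where "\<tau> \<le> \<sigma>" "1 \<le> \<tau>" "\<tau> \<le> T'" "T = 0 \<or> T' = T"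
    "ety ar \<Gamma> \<Delta> \<tau> T' e \<tau>" "sty ar \<Gamma> \<Delta> \<tau> T' a \<tau>"
proof -
  have "\<exists>\<tau> T'. \<tau> \<le> \<sigma> \<and> 1 \<le> \<tau> \<and> \<tau> \<le> T' \<and> (T = 0 \<or> T' = T) \<and>
      ety ar \<Gamma> \<Delta> \<tau> T' e \<tau> \<and> sty ar \<Gamma> \<Delta> \<tau> T' a \<tau>"
    if "sty ar \<Gamma> \<Delta> ti T s \<sigma>" "s = While e a" for s
    using that by (induction rule: sty.induct) (auto intro: le_trans)
  then show ?thesis using assms that by blast
qed

lemma sty_unfold_While:
  "ety ar \<Gamma> \<Delta> \<tau> T e \<tau> \<Longrightarrow> sty ar \<Gamma> \<Delta> \<tau> T a \<tau> \<Longrightarrow> 1 \<le> \<tau> \<Longrightarrow> \<tau> \<le> T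
    \<Longrightarrow> sty ar \<Gamma> \<Delta> \<tau> T (Seq a (While e a)) \<tau>"
  by (intro TSeq TWh)

lemma tree_child_sty:
  assumes "tree_child one sem c c'" "sty ar \<Gamma> \<Delta> ti to (snd c) \<sigma>"
  shows "\<exists>ti' to' \<sigma>'. sty ar \<Gamma> \<Delta> ti' to' (snd c') \<sigma>'"
  using assms(1)
proof (cases rule: tree_child.cases)
  case (CWhile \<mu> e s)
  from assms(2) CWhile have "sty ar \<Gamma> \<Delta> ti to (While e s) \<sigma>" by simp
  then obtain \<tau> T' where "\<tau> \<le> \<sigma>" "1 \<le> \<tau>" "\<tau> \<le> T'" "to = 0 \<or> T' = to"
    "ety ar \<Gamma> \<Delta> \<tau> T' e \<tau>" "sty ar \<Gamma> \<Delta> \<tau> T' s \<tau>"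
    by (rule sty_WhileE)
  then show ?thesis using CWhile sty_unfold_While by fastforce
qed (use assms(2) in \<open>auto elim!: sty_SeqE sty_IfE\<close>)

definition reachable :: "'a \<Rightarrow> ('op \<Rightarrow> 'a word list \<Rightarrow> 'a word) \<Rightarrow> 'op stmt
    \<Rightarrow> 'a store \<times> 'op stmt \<Rightarrow> bool" where
  "reachable one sem b c \<longleftrightarrow> (\<exists>\<mu>. (tree_child one sem)\<^sup>*\<^sup>* (\<mu>, b) c)"

lemma reachable_init: "reachable one sem b (\<mu>, b)"
  unfolding reachable_def by blast

lemma reachable_step: "reachable one sem b c \<Longrightarrow> tree_child one sem c c' \<Longrightarrow> reachable one sem b c'"
  unfolding reachable_def by (meson rtranclp.rtrancl_into_rtrancl)

lemma reachable_trancl: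
  "reachable one sem b c \<Longrightarrow> (tree_child one sem)\<^sup>+\<^sup>+ c c' \<Longrightarrow> reachable one sem b c'"
  unfolding reachable_def by (meson rtranclp_trans tranclp_into_rtranclp)

lemma reachable_svars: "reachable one sem b c \<Longrightarrow> svars (snd c) \<subseteq> svars b"
  unfolding reachable_def
proof (elim exE)
  fix \<mu> assume "(tree_child one sem)\<^sup>*\<^sup>* (\<mu>, b) c"
  then show "svars (snd c) \<subseteq> svars b"
    by (induction rule: rtranclp_induct) (use tree_child_svars in fastforce)+
qed

lemma reachable_unfoldings: "reachable one sem b c \<Longrightarrow> snd c \<in> unfoldings b"
  unfolding reachable_def
proof (elim exE)
  fix \<mu> assume "(tree_child one sem)\<^sup>*\<^sup>* (\<mu>, b) c"
  then show "snd c \<in> unfoldings b"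
  proof (induction rule: rtranclp_induct)
    case base
    show ?case by (simp add: unfoldings_def substmts_refl)
  next
    case (step d d')
    from step.hyps(2) step.IH show ?case by (rule tree_child_unfoldings)
  qed
qed

lemma reachable_sty:
  assumes "reachable one sem b c" "sty ar \<Gamma> \<Delta> ti to b \<sigma>"
  shows "\<exists>ti' to' \<sigma>'. sty ar \<Gamma> \<Delta> ti' to' (snd c) \<sigma>'"
proof -
  obtain \<mu> where "(tree_child one sem)\<^sup>*\<^sup>* (\<mu>, b) c" using assms(1) unfolding reachable_def by blast
  then show ?thesis
    by (induction rule: rtranclp_induct) (use assms(2) tree_child_sty in fastforce)+
qed

definition aperiodic :: "'a \<Rightarrow> ('op \<Rightarrow> 'a word list \<Rightarrow> 'a word) \<Rightarrow> 'op stmt \<Rightarrow> bool" where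
  "aperiodic one sem b \<longleftrightarrow> (\<forall>\<mu>' \<mu>'' e a. reachable one sem b (\<mu>', While e a) \<longrightarrow>
      (tree_child one sem)\<^sup>+\<^sup>+ (\<mu>', While e a) (\<mu>'', While e a) \<longrightarrow> (\<exists>x \<in> U e. \<mu>' x \<noteq> \<mu>'' x))"

lemma AP_iff_aperiodic: "P \<in> AP one sem \<longleftrightarrow> aperiodic one sem (body P)"
  unfolding AP_def aperiodic_def reachable_def by blast

definition diverges :: "'a \<Rightarrow> ('op \<Rightarrow> 'a word list \<Rightarrow> 'a word) \<Rightarrow> 'a store \<times> 'op stmt \<Rightarrow> bool" where
  "diverges one sem c \<longleftrightarrow> (\<nexists>r. big_step one sem c r)"

lemma diverges_tree_child:
  assumes "diverges one sem (\<mu>, s)"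
  shows "\<exists>c'. tree_child one sem (\<mu>, s) c' \<and> diverges one sem c'"
proof (cases s)
  case (Seq s1 s2)
  show ?thesis
  proof (cases "diverges one sem (\<mu>, s1)")
    case False
    then obtain b \<mu>1 where r: "big_step one sem (\<mu>, s1) (b, \<mu>1)" unfolding diverges_def by auto
    then have "b \<and> diverges one sem (\<mu>1, s2)"
      using assms Seq BSeqBot[of one sem \<mu> s1 \<mu>1 s2] BSeq[of one sem \<mu> s1 \<mu>1 s2]
      unfolding diverges_def by (cases b) auto
    then show ?thesis using CSeq2[of one sem \<mu> s1 \<mu>1 s2] r Seq by auto
  qed (use Seq CSeq1[of one sem \<mu> s1 s2] in blast)
next
  case (If e s1 s2)
  show ?thesis
  proof (cases "eval one sem \<mu> e = [one]")
    case True
    then have "diverges one sem (\<mu>, s1)"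
      using assms If BIfT[of one sem] unfolding diverges_def split_paired_Ex by blast
    then show ?thesis using CIfT[of one sem] True If by blast
  next
    case False
    then have "diverges one sem (\<mu>, s2)"
      using assms If BIfF[of one sem] unfolding diverges_def split_paired_Ex by blast
    then show ?thesis using CIfF[of one sem] False If by blast
  qed
next
  case (While e a)
  have guard: "eval one sem \<mu> e = [one]"
    using assms While BWhileF[of one sem] unfolding diverges_def by blast
  then have "diverges one sem (\<mu>, Seq a (While e a))"
    using assms While BWhileT[of one sem] unfolding diverges_def split_paired_Ex by blast
  then show ?thesis using CWhile[of one sem] guard While by blast
next
  case Skip
  then show ?thesis using assms BSkip[of one sem] unfolding diverges_def by blast
next
  case (Assign x e)
  then show ?thesis using assms BAssign[of one sem] unfolding diverges_def by blast
next
  case (Break e)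
  then show ?thesis
    using assms BBreakT[of one sem] BBreakF[of one sem] unfolding diverges_def split_paired_Ex by blast
qed

lemma diverging_path:
  assumes "diverges one sem c0"
  shows "\<exists>f. f 0 = c0 \<and> (\<forall>n. tree_child one sem (f n) (f (Suc n)))"
proof -
  define next_c where "next_c c = (SOME c'. tree_child one sem c c' \<and> diverges one sem c')" for c
  define f where "f n = (next_c ^^ n) c0" for n
  have next_c: "tree_child one sem c (next_c c) \<and> diverges one sem (next_c c)"
    if "diverges one sem c" for c
  proof -
    obtain \<mu> s where "c = (\<mu>, s)" by fastforce
    then have "\<exists>c'. tree_child one sem c c' \<and> diverges one sem c'"
      using diverges_tree_child that by simp
    then show ?thesis unfolding next_c_def by (rule someI_ex)
  qed
  have "diverges one sem (f n)" for n
    by (induction n) (simp_all add: f_def assms next_c)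
  then have "tree_child one sem (f n) (f (Suc n))" for n using next_c by (simp add: f_def)
  moreover have "f 0 = c0" by (simp add: f_def)
  ultimately show ?thesis by blast
qed

lemma path_rtranclp:
  assumes "\<And>n. tree_child one sem (f n) (f (Suc n))" "m \<le> n"
  shows "(tree_child one sem)\<^sup>*\<^sup>* (f m) (f n)"
  using assms(2)
proof (induction rule: dec_induct)
  case (step n)
  from step.IH assms(1)[of n] show ?case by (rule rtranclp.rtrancl_into_rtrancl)
qed simp

lemma path_tranclp:
  assumes "\<And>n. tree_child one sem (f n) (f (Suc n))" "m < n"
  shows "(tree_child one sem)\<^sup>+\<^sup>+ (f m) (f n)"
proof -
  have "(tree_child one sem)\<^sup>*\<^sup>* (f (Suc m)) (f n)"
    by (rule path_rtranclp) (use assms in auto)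
  with assms(1)[of m] show ?thesis by (rule rtranclp_into_tranclp2)
qed

text \<open>Outside loops the statement strictly shrinks along a path, so an infinite path
  meets loop configurations infinitely often.\<close>
lemma path_infinitely_many_loops:
  assumes "\<And>n. tree_child one sem (f n) (f (Suc n))"
  shows "infinite {n. \<exists>e a. snd (f n) = While e a}"
proof
  assume "finite {n. \<exists>e a. snd (f n) = While e a}"
  then obtain N where N: "\<forall>n\<in>{n. \<exists>e a. snd (f n) = While e a}. n < N"
    unfolding finite_nat_set_iff_bounded by blast
  have "size (snd (f (N + k))) + k \<le> size (snd (f N))" for k
  proof (induction k)
    case (Suc k)
    have "size (snd (f (Suc (N + k)))) < size (snd (f (N + k)))"
      using tree_child_size[OF assms[of "N + k"]] N by auto
    then show ?case using Suc by simp
  qed simp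
  from this[of "Suc (size (snd (f N)))"] show False by simp
qed

lemma path_recurring_loop:
  assumes "\<And>n. tree_child one sem (f n) (f (Suc n))" "finite F" "\<And>n. snd (f n) \<in> F"
  obtains e a where "infinite {n. snd (f n) = While e a}"
proof -
  let ?I = "{n. \<exists>e a. snd (f n) = While e a}"
  have "(snd \<circ> f) ` ?I \<subseteq> F" using assms(3) by auto
  then have "finite ((snd \<circ> f) ` ?I)" using assms(2) by (rule finite_subset)
  moreover have "infinite ?I" by (rule path_infinitely_many_loops) (rule assms(1))
  ultimately obtain n0 where n0: "n0 \<in> ?I"
    and inf: "infinite {n \<in> ?I. (snd \<circ> f) n = (snd \<circ> f) n0}"
    using pigeonhole_infinite by blast
  from n0 obtain e a where "snd (f n0) = While e a" by blast
  then have "{n \<in> ?I. (snd \<circ> f) n = (snd \<circ> f) n0} \<subseteq> {n. snd (f n) = While e a}" by auto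
  with inf show ?thesis using that infinite_super by blast
qed

lemma aperiodicD:
  "aperiodic one sem b \<Longrightarrow> reachable one sem b (\<mu>, While e a)
    \<Longrightarrow> (tree_child one sem)\<^sup>+\<^sup>+ (\<mu>, While e a) (\<mu>', While e a) \<Longrightarrow> \<exists>x\<in>U e. \<mu> x \<noteq> \<mu>' x"
  unfolding aperiodic_def by blast

section \<open>Termination of safe aperiodic programs\<close>

lemma safe_env_typed_op:
  assumes "safe_env zero one ar sem \<Delta>" "\<Delta> op = Some D" "ts \<in> D ti to" "to \<noteq> 0"
  shows "length ts = Suc (ar op)" "\<And>i. i < ar op \<Longrightarrow> ts ! ar op \<le> ts ! i"
    "op_neutral zero one ar sem op \<or> op_positive ar sem op \<and> (ts ! ar op < ti \<or> ts ! ar op = 0)"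
proof -
  have A: "length ts = Suc (ar op) \<and> (\<forall>i < ar op. ts ! ar op \<le> ts ! i) \<and>
      (op_neutral zero one ar sem op \<or> ts ! ar op < ti \<or> ts ! ar op = 0)"
    and B: "op_neutral zero one ar sem op \<or> op_positive ar sem op"
    using assms unfolding safe_env_def by metis+
  show "length ts = Suc (ar op)" "\<And>i. i < ar op \<Longrightarrow> ts ! ar op \<le> ts ! i"
    using A by simp_all
  show "op_neutral zero one ar sem op \<or> op_positive ar sem op \<and> (ts ! ar op < ti \<or> ts ! ar op = 0)"
    using A B by argo
qed

text \<open>With \<open>\<tau>\<^sub>o\<^sub>u\<^sub>t \<noteq> 0\<close> a safe operator's result level lies below its argument levels.\<close>
lemma ety_U_level:
  assumes "ety ar \<Gamma> \<Delta> ti to e \<rho>" "safe_env zero one ar sem \<Delta>" "to \<noteq> 0" "x \<in> U e"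
  shows "\<rho> \<le> \<Gamma> x"
  using assms
proof (induction rule: ety.induct)
  case (TOp op D ts ti to es)
  obtain i where i: "i < length es" "x \<in> U (es ! i)"
    using TOp.prems(3) by (auto simp: in_set_conv_nth)
  then have "ts ! i \<le> \<Gamma> x" using TOp.IH TOp.prems(1,2) by blast
  moreover have "ts ! length es \<le> ts ! i"
    using safe_env_typed_op(2)[OF TOp.prems(1) TOp.hyps(1,2) TOp.prems(2)] TOp.hyps(3) i by auto
  ultimately show ?case by simp
qed auto

definition closed_value_set :: "'a \<Rightarrow> 'a \<Rightarrow> 'a word set \<Rightarrow> bool" where
  "closed_value_set zero one S \<longleftrightarrow> [zero] \<in> S \<and> [one] \<in> S \<and>
     (\<forall>v\<in>S. \<forall>u. subword u v \<longrightarrow> u \<in> S) \<and> (\<forall>v\<in>S. \<forall>k\<le>length v. replicate k one \<in> S)"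

definition high_in :: "(var \<Rightarrow> nat) \<Rightarrow> var set \<Rightarrow> nat \<Rightarrow> 'a word set \<Rightarrow> 'a store \<Rightarrow> bool" where
  "high_in \<Gamma> V \<tau> S \<mu> \<longleftrightarrow> (\<forall>x\<in>V. \<tau> \<le> \<Gamma> x \<longrightarrow> \<mu> x \<in> S)"

text \<open>Above level \<open>\<tau> \<ge> \<tau>\<^sub>i\<^sub>n\<close> only neutral operators and declassification can be applied,
  and these stay inside a closed value set.\<close>
lemma eval_in_closed_value_set:
  assumes "ety ar \<Gamma> \<Delta> ti to e \<rho>" "safe_env zero one ar sem \<Delta>" "to \<noteq> 0"
    "ti \<le> \<tau>" "1 \<le> \<tau>" "\<tau> \<le> \<rho>" "evars e \<subseteq> V" "high_in \<Gamma> V \<tau> S \<mu>"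
    "closed_value_set zero one S"
  shows "eval one sem \<mu> e \<in> S"
  using assms
proof (induction rule: ety.induct)
  case (TVar x \<tau>' ti to)
  then show ?case by (auto simp: high_in_def)
next
  case (TOp op D ts ti to es)
  note typed_op = safe_env_typed_op[OF TOp.prems(1) TOp.hyps(1,2) TOp.prems(2)]
  let ?ws = "map (eval one sem \<mu>) es"
  have lws: "length ?ws = ar op" using TOp.hyps(3) by simp
  have neutral: "op_neutral zero one ar sem op"
    using typed_op(3) TOp.prems(3,4,5) TOp.hyps(3) by auto
  have args: "?ws ! i \<in> S" if i: "i < length es" for i
  proof -
    have "\<tau> \<le> ts ! i" using typed_op(2) TOp.prems(5) TOp.hyps(3) i by force
    moreover have "evars (es ! i) \<subseteq> V" using TOp.prems(6) i nth_mem by fastforce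
    ultimately show "?ws ! i \<in> S" using TOp.IH i TOp.prems by auto
  qed
  from neutral show ?case
    unfolding op_neutral_def
  proof
    assume "\<forall>ws. length ws = ar op \<longrightarrow> sem op ws \<in> {[zero], [one]}"
    then have "sem op ?ws \<in> {[zero], [one]}" using lws by blast
    then show ?thesis using TOp.prems(8) by (auto simp: closed_value_set_def)
  next
    assume "\<exists>i<ar op. \<forall>ws. length ws = ar op \<longrightarrow> subword (sem op ws) (ws ! i)"
    then obtain i where "i < ar op" "subword (sem op ?ws) (?ws ! i)" using lws by blast
    then show ?thesis using args[of i] TOp.hyps(3) TOp.prems(8) by (auto simp: closed_value_set_def)
  qed
next
  case (TDcl ti to e1 \<tau>1 e2 \<tau>')
  have "eval one sem \<mu> e2 \<in> S" using TDcl by auto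
  then show ?case using TDcl.prems(8) by (auto simp: closed_value_set_def)
qed

lemma big_step_high_in:
  assumes "big_step one sem c r" "safe_env zero one ar sem \<Delta>" "closed_value_set zero one S"
    "1 \<le> \<tau>" "\<tau> \<le> T"
  shows "sty ar \<Gamma> \<Delta> ti T (snd c) \<sigma> \<Longrightarrow> ti \<le> \<tau> \<Longrightarrow> \<sigma> \<le> \<tau> \<Longrightarrow> svars (snd c) \<subseteq> V
    \<Longrightarrow> high_in \<Gamma> V \<tau> S (fst c) \<Longrightarrow> high_in \<Gamma> V \<tau> S (snd r)"
  using assms(1)
proof (induction arbitrary: ti \<sigma> rule: big_step.induct)
  case (BAssign \<mu> x e)
  obtain \<tau>2 where t: "\<Gamma> x \<le> \<sigma>" "ety ar \<Gamma> \<Delta> ti T e \<tau>2" "T = 0 \<or> \<Gamma> x \<le> \<tau>2"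
    using BAssign.prems(1) by (auto elim: sty_AssignE)
  have "eval one sem \<mu> e \<in> S" if "\<tau> \<le> \<Gamma> x"
    using eval_in_closed_value_set[OF t(2) assms(2) _ BAssign.prems(2) assms(4) _ _ _ assms(3)]
      t that BAssign.prems assms(4,5) by auto
  then show ?case using BAssign.prems(5) by (auto simp: high_in_def)
next
  case (BSeqBot \<mu> s1 \<mu>1 s2)
  then show ?case by (fastforce elim: sty_SeqE)
next
  case (BSeq \<mu> s1 \<mu>1 s2 b \<mu>2)
  then show ?case by (fastforce elim: sty_SeqE)
next
  case (BIfT \<mu> e s1 b \<mu>' s2)
  then show ?case by (fastforce elim: sty_IfE)
next
  case (BIfF \<mu> e s2 b \<mu>' s1)
  then show ?case by (fastforce elim: sty_IfE)
next
  case (BWhileT \<mu> e s b \<mu>')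
  from BWhileT.prems(1) have "sty ar \<Gamma> \<Delta> ti T (While e s) \<sigma>" by simp
  then obtain \<tau>' T' where
    t: "\<tau>' \<le> \<sigma>" "1 \<le> \<tau>'" "\<tau>' \<le> T'" "T = 0 \<or> T' = T" "ety ar \<Gamma> \<Delta> \<tau>' T' e \<tau>'"
      "sty ar \<Gamma> \<Delta> \<tau>' T' s \<tau>'"
    by (rule sty_WhileE)
  then have "sty ar \<Gamma> \<Delta> \<tau>' T (Seq s (While e s)) \<tau>'"
    using assms(4,5) sty_unfold_While by auto
  then show ?case using BWhileT t by fastforce
qed auto

definition typed_below :: "('op \<Rightarrow> nat) \<Rightarrow> (var \<Rightarrow> nat) \<Rightarrow> 'op openv \<Rightarrow> nat \<Rightarrow> nat \<Rightarrow> 'op stmt \<Rightarrow> bool"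
  where "typed_below ar \<Gamma> \<Delta> T \<tau> s \<longleftrightarrow> (\<exists>ti \<sigma>. sty ar \<Gamma> \<Delta> ti T s \<sigma> \<and> ti \<le> \<tau> \<and> \<sigma> \<le> \<tau>)"

lemma tree_child_typed_below:
  assumes "tree_child one sem c c'" "typed_below ar \<Gamma> \<Delta> T \<tau> (snd c)" "1 \<le> \<tau>" "\<tau> \<le> T"
  shows "typed_below ar \<Gamma> \<Delta> T \<tau> (snd c')"
proof -
  obtain ti \<sigma> where ty: "sty ar \<Gamma> \<Delta> ti T (snd c) \<sigma>" "ti \<le> \<tau>" "\<sigma> \<le> \<tau>"
    using assms(2) unfolding typed_below_def by blast
  show ?thesis using assms(1)
  proof (cases rule: tree_child.cases)
    case (CWhile \<mu> e s)
    from ty(1) CWhile have "sty ar \<Gamma> \<Delta> ti T (While e s) \<sigma>" by simp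
    then obtain \<tau>' T' where
      t: "\<tau>' \<le> \<sigma>" "1 \<le> \<tau>'" "\<tau>' \<le> T'" "T = 0 \<or> T' = T" "ety ar \<Gamma> \<Delta> \<tau>' T' e \<tau>'"
        "sty ar \<Gamma> \<Delta> \<tau>' T' s \<tau>'"
      by (rule sty_WhileE)
    then have "sty ar \<Gamma> \<Delta> \<tau>' T (Seq s (While e s)) \<tau>'"
      using assms(3,4) sty_unfold_While by auto
    then show ?thesis using CWhile t ty unfolding typed_below_def by fastforce
  qed (use ty in \<open>fastforce simp: typed_below_def elim: sty_SeqE sty_IfE\<close>)+
qed

lemma tree_child_high_in:
  assumes "tree_child one sem c c'" "typed_below ar \<Gamma> \<Delta> T \<tau> (snd c)" "1 \<le> \<tau>" "\<tau> \<le> T"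
    "safe_env zero one ar sem \<Delta>" "closed_value_set zero one S" "svars (snd c) \<subseteq> V"
    "high_in \<Gamma> V \<tau> S (fst c)"
  shows "high_in \<Gamma> V \<tau> S (fst c')"
  using assms(1)
proof (cases rule: tree_child.cases)
  case (CSeq2 \<mu> s1 \<mu>1 s2)
  obtain ti \<sigma> where ty: "sty ar \<Gamma> \<Delta> ti T s1 \<sigma>" "ti \<le> \<tau>" "\<sigma> \<le> \<tau>"
    using assms(2) CSeq2 unfolding typed_below_def by (auto elim: sty_SeqE)
  then show ?thesis
    using big_step_high_in[OF CSeq2(3) assms(5,6,3,4)] CSeq2 assms(7,8) by auto
qed (use assms in auto)

lemma rtranclp_high_in:
  assumes "(tree_child one sem)\<^sup>*\<^sup>* c c'" "typed_below ar \<Gamma> \<Delta> T \<tau> (snd c)" "1 \<le> \<tau>" "\<tau> \<le> T"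
    "safe_env zero one ar sem \<Delta>" "closed_value_set zero one S" "svars (snd c) \<subseteq> V"
    "high_in \<Gamma> V \<tau> S (fst c)"
  shows "high_in \<Gamma> V \<tau> S (fst c')"
proof -
  from assms(1) have "typed_below ar \<Gamma> \<Delta> T \<tau> (snd c') \<and> svars (snd c') \<subseteq> V \<and> high_in \<Gamma> V \<tau> S (fst c')"
  proof (induction rule: rtranclp_induct)
    case (step d d')
    then show ?case
      using tree_child_typed_below[OF step.hyps(2) _ assms(3,4)]
        tree_child_high_in[OF step.hyps(2) _ assms(3-6)] tree_child_svars[OF step.hyps(2)] by blast
  qed (use assms in simp)
  then show ?thesis by blast
qed

lemma aperiodic_path_differ:
  assumes "aperiodic one sem b" "\<And>n. tree_child one sem (f n) (f (Suc n))"
    and "\<And>n. reachable one sem b (f n)"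
    and "snd (f i) = While e a" "snd (f j) = While e a" "i \<noteq> j"
  shows "\<exists>x\<in>U e. fst (f i) x \<noteq> fst (f j) x"
proof -
  have differ: "\<exists>x\<in>U e. fst (f i') x \<noteq> fst (f j') x"
    if "snd (f i') = While e a" "snd (f j') = While e a" "i' < j'" for i' j'
  proof (rule aperiodicD[OF assms(1)])
    have "f i' = (fst (f i'), While e a)" "f j' = (fst (f j'), While e a)"
      using that by (simp_all add: prod_eq_iff)
    then show "reachable one sem b (fst (f i'), While e a)"
      and "(tree_child one sem)\<^sup>+\<^sup>+ (fst (f i'), While e a) (fst (f j'), While e a)"
      using assms(3)[of i'] path_tranclp[where f = f, OF assms(2) \<open>i' < j'\<close>] by simp_all
  qed
  show ?thesis
  proof (cases "i < j")
    case False
    then have "j < i" using \<open>i \<noteq> j\<close> by simp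
    from differ[OF assms(5,4) this] show ?thesis by metis
  qed (use differ assms(4,5) in blast)
qed

text \<open>From a visit to a loop of level \<open>\<tau>\<close> on, the variables of level \<open>\<ge> \<tau>\<close>, among them
  the guard variables, stay in the finite set of words no longer than at that visit.\<close>
lemma aperiodic_path_finitely_many_visits:
  fixes zero one :: "'a::finite"
  assumes "aperiodic one sem b" "safe_env zero one ar sem \<Delta>"
    and path: "\<And>n. tree_child one sem (f n) (f (Suc n))" and reach: "\<And>n. reachable one sem b (f n)"
    and n0: "snd (f n0) = While e a"
    and te: "ety ar \<Gamma> \<Delta> \<tau> T e \<tau>" and ta: "sty ar \<Gamma> \<Delta> \<tau> T a \<tau>" and \<tau>: "1 \<le> \<tau>" "\<tau> \<le> T"
  shows "finite {n. snd (f n) = While e a}"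
proof -
  define V where "V = svars (While e a)"
  define S where "S = {u :: 'a word. length u \<le> Suc (\<Sum>x\<in>V. length (fst (f n0) x))}"
  have finite_S: "finite S"
    unfolding S_def using finite_lists_length_le[OF finite_UNIV] by simp
  have closed_S: "closed_value_set zero one S"
    unfolding closed_value_set_def S_def subword_def by force
  have high: "high_in \<Gamma> V \<tau> S (fst (f n))" if "n0 \<le> n" for n
  proof (rule rtranclp_high_in[OF path_rtranclp[where f = f, OF path that] _ \<tau> assms(2) closed_S])
    show "typed_below ar \<Gamma> \<Delta> T \<tau> (snd (f n0))"
      unfolding typed_below_def n0 using \<tau> te ta by (blast intro: TWh)
    show "svars (snd (f n0)) \<subseteq> V" unfolding V_def n0 ..
    have "length (fst (f n0) x) \<le> (\<Sum>x\<in>V. length (fst (f n0) x))" if "x \<in> V" for x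
      by (rule member_le_sum) (use that in \<open>simp_all add: V_def finite_evars finite_svars\<close>)
    then show "high_in \<Gamma> V \<tau> S (fst (f n0))" unfolding high_in_def S_def by (simp add: le_SucI)
  qed
  define J where "J = {n. snd (f n) = While e a} \<inter> {n0..}"
  have "finite J"
  proof (rule card_le_if_restrictions_differ(1)[OF finite_U finite_S])
    show "fst (f n) x \<in> S" if "n \<in> J" "x \<in> U e" for n x
    proof -
      have "x \<in> V" using that(2) U_subset_evars unfolding V_def by auto
      moreover have "\<tau> \<le> \<Gamma> x" using ety_U_level[OF te assms(2) _ that(2)] \<tau> by simp
      moreover have "n0 \<le> n" using that(1) unfolding J_def by simp
      ultimately show ?thesis using high unfolding high_in_def by blast
    qed
    show "\<exists>x\<in>U e. fst (f i) x \<noteq> fst (f j) x" if "i \<in> J" "j \<in> J" "i \<noteq> j" for i j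
      using aperiodic_path_differ[where f = f, OF assms(1) path reach] that unfolding J_def by blast
  qed
  then have "finite (J \<union> {..<n0})" by simp
  moreover have "{n. snd (f n) = While e a} \<subseteq> J \<union> {..<n0}" unfolding J_def by auto
  ultimately show ?thesis by (rule finite_subset[rotated])
qed

lemma diverges_if_no_result:
  assumes "length ws = length (params P)" "\<nexists>w. computes one sem P ws w"
  shows "diverges one sem (init_store (params P) ws, body P)"
  unfolding diverges_def
proof
  assume "\<exists>r. big_step one sem (init_store (params P) ws, body P) r"
  then obtain b \<mu>' where "big_step one sem (init_store (params P) ws, body P) (b, \<mu>')" by auto
  then have "computes one sem P ws (\<mu>' (ret P))" using assms(1) unfolding computes_def by blast
  with assms(2) show False by blast
qed

theorem safe_aperiodic_terminates:
  fixes zero one :: "'a::finite"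
  assumes "P \<in> SAFE zero one ar sem" "P \<in> AP one sem"
  shows "P \<in> TERM_progs one sem"
  unfolding TERM_progs_def
proof (intro CollectI allI impI)
  fix ws :: "'a word list"
  assume len: "length ws = length (params P)"
  show "\<exists>w. computes one sem P ws w"
  proof (rule ccontr)
    assume "\<nexists>w. computes one sem P ws w"
    then obtain f where f0: "f 0 = (init_store (params P) ws, body P)"
      and path: "\<And>n. tree_child one sem (f n) (f (Suc n))"
      using diverging_path[OF diverges_if_no_result[OF len]] by blast
    obtain \<Gamma> \<Delta> \<sigma>0 where safe: "safe_env zero one ar sem \<Delta>" and ty0: "sty ar \<Gamma> \<Delta> 0 0 (body P) \<sigma>0"
      using assms(1) unfolding SAFE_def by auto
    have reach: "reachable one sem (body P) (f n)" for n
      unfolding reachable_def using path_rtranclp[where f = f, OF path, of 0 n] f0 by auto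
    obtain e a where loops: "infinite {n. snd (f n) = While e a}"
      using path_recurring_loop[where f = f, OF path finite_unfoldings reachable_unfoldings[OF reach]] .
    from not_finite_existsD[OF loops] obtain n0 where n0: "snd (f n0) = While e a" by blast
    from reachable_sty[OF reach[of n0] ty0] n0 obtain ti to \<sigma> where "sty ar \<Gamma> \<Delta> ti to (While e a) \<sigma>"
      by auto
    then obtain \<tau> T where "\<tau> \<le> \<sigma>" "1 \<le> \<tau>" "\<tau> \<le> T" "to = 0 \<or> T = to"
      "ety ar \<Gamma> \<Delta> \<tau> T e \<tau>" "sty ar \<Gamma> \<Delta> \<tau> T a \<tau>"
      by (rule sty_WhileE)
    then have "finite {n. snd (f n) = While e a}"
      using aperiodic_path_finitely_many_visits[OF assms(2)[unfolded AP_iff_aperiodic] safe path reach n0]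
      by blast
    with loops show False by blast
  qed
qed

section \<open>Length bounds for safe aperiodic programs\<close>

definition len_above :: "(var \<Rightarrow> nat) \<Rightarrow> var set \<Rightarrow> nat \<Rightarrow> 'a store \<Rightarrow> nat" where
  "len_above \<Gamma> V j \<mu> = Max (insert 0 ((\<lambda>x. length (\<mu> x)) ` {x\<in>V. j \<le> \<Gamma> x}))"

lemma len_above_ge: "finite V \<Longrightarrow> x \<in> V \<Longrightarrow> j \<le> \<Gamma> x \<Longrightarrow> length (\<mu> x) \<le> len_above \<Gamma> V j \<mu>"
  unfolding len_above_def by (rule Max_ge) auto

lemma len_above_le:
  "finite V \<Longrightarrow> (\<And>x. x \<in> V \<Longrightarrow> j \<le> \<Gamma> x \<Longrightarrow> length (\<mu> x) \<le> B) \<Longrightarrow> len_above \<Gamma> V j \<mu> \<le> B"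
  unfolding len_above_def by (subst Max_le_iff) auto

lemma len_above_antimono: "finite V \<Longrightarrow> j \<le> j' \<Longrightarrow> len_above \<Gamma> V j' \<mu> \<le> len_above \<Gamma> V j \<mu>"
  by (rule len_above_le) (auto intro: len_above_ge)

lemma big_step_unchanged_outside:
  "big_step one sem c r \<Longrightarrow> x \<notin> svars (snd c) \<Longrightarrow> snd r x = fst c x"
  by (induction rule: big_step.induct) auto

lemma big_step_unchanged_above:
  assumes "big_step one sem c r"
  shows "sty ar \<Gamma> \<Delta> ti to (snd c) \<sigma> \<Longrightarrow> \<sigma> < \<Gamma> x \<Longrightarrow> snd r x = fst c x"
  using assms
proof (induction arbitrary: ti to \<sigma> rule: big_step.induct)
  case (BAssign \<mu> y e)
  then show ?case by (auto elim: sty_AssignE)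
next
  case (BSeqBot \<mu> s1 \<mu>1 s2)
  then show ?case by (fastforce elim: sty_SeqE)
next
  case (BSeq \<mu> s1 \<mu>1 s2 b \<mu>2)
  then show ?case by (fastforce elim: sty_SeqE)
next
  case (BIfT \<mu> e s1 b \<mu>' s2)
  then show ?case by (fastforce elim: sty_IfE)
next
  case (BIfF \<mu> e s2 b \<mu>' s1)
  then show ?case by (fastforce elim: sty_IfE)
next
  case (BWhileT \<mu> e s b \<mu>')
  from BWhileT.prems(1) have "sty ar \<Gamma> \<Delta> ti to (While e s) \<sigma>" by simp
  then obtain \<tau> T' where "\<tau> \<le> \<sigma>" "1 \<le> \<tau>" "\<tau> \<le> T'" "to = 0 \<or> T' = to"
    "ety ar \<Gamma> \<Delta> \<tau> T' e \<tau>" "sty ar \<Gamma> \<Delta> \<tau> T' s \<tau>"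
    by (rule sty_WhileE)
  then show ?case using BWhileT sty_unfold_While by fastforce
qed auto

definition pos_const :: "('op \<Rightarrow> nat) \<Rightarrow> ('op \<Rightarrow> 'a word list \<Rightarrow> 'a word) \<Rightarrow> 'op \<Rightarrow> nat" where
  "pos_const ar sem op = (SOME c. \<forall>ws. length ws = ar op \<longrightarrow> length (sem op ws) \<le> maxlen ws + c)"

lemma length_sem_le_pos_const:
  assumes "op_positive ar sem op" "length ws = ar op"
  shows "length (sem op ws) \<le> maxlen ws + pos_const ar sem op"
proof -
  let ?P = "\<lambda>c. \<forall>ws. length ws = ar op \<longrightarrow> length (sem op ws) \<le> maxlen ws + c"
  have "?P (SOME c. ?P c)" using assms(1) unfolding op_positive_def by (rule someI_ex)
  then show ?thesis using assms(2) unfolding pos_const_def by blast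
qed

text \<open>The extra \<open>1\<close> per operator accounts for the boolean results of neutral operators.\<close>
primrec pos_cost :: "('op \<Rightarrow> nat) \<Rightarrow> 'op expr \<Rightarrow> nat" where
  "pos_cost c (Var x) = 0"
| "pos_cost c (Op op es) = c op + 1 + sum_list (map (pos_cost c) es)"
| "pos_cost c (Declass e1 e2) = pos_cost c e2"

lemma maxlen_le: "(\<And>w. w \<in> set ws \<Longrightarrow> length w \<le> B) \<Longrightarrow> maxlen ws \<le> B"
  unfolding maxlen_def by (subst Max_le_iff) auto

lemma maxlen_ge: "w \<in> set ws \<Longrightarrow> length w \<le> maxlen ws"
  unfolding maxlen_def by (rule Max_ge) auto

lemma length_subword: "subword u v \<Longrightarrow> length u \<le> length v"
  unfolding subword_def by auto

lemma length_sem_neutral: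
  assumes "op_neutral zero one ar sem op" "length ws = ar op"
  shows "length (sem op ws) \<le> maxlen ws + 1"
  using assms(1) unfolding op_neutral_def
proof (elim disjE exE conjE)
  fix i assume i: "i < ar op" "\<forall>ws. length ws = ar op \<longrightarrow> subword (sem op ws) (ws ! i)"
  have "length (sem op ws) \<le> length (ws ! i)" using i assms(2) length_subword by blast
  also have "\<dots> \<le> maxlen ws" using i assms(2) by (intro maxlen_ge) simp
  finally show ?thesis by simp
qed (use assms(2) in force)

text \<open>Only positive operators add to the length, and only a constant each.\<close>
lemma length_eval_le:
  assumes "ety ar \<Gamma> \<Delta> ti to e \<rho>" "safe_env zero one ar sem \<Delta>" "to \<noteq> 0" "finite V" "evars e \<subseteq> V"
  shows "length (eval one sem \<mu> e) \<le> len_above \<Gamma> V \<rho> \<mu> + pos_cost (pos_const ar sem) e"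
  using assms
proof (induction rule: ety.induct)
  case (TVar x \<tau> ti to)
  then show ?case using len_above_ge[of V x \<tau> \<Gamma> \<mu>] by simp
next
  case (TOp op D ts ti to es)
  note typed_op = safe_env_typed_op[OF TOp.prems(1) TOp.hyps(1,2) TOp.prems(2)]
  let ?ws = "map (eval one sem \<mu>) es"
  let ?L = "len_above \<Gamma> V (ts ! length es) \<mu>"
  let ?A = "sum_list (map (pos_cost (pos_const ar sem)) es)"
  have lws: "length ?ws = ar op" using TOp.hyps(3) by simp
  have args: "length (?ws ! i) \<le> ?L + ?A" if i: "i < length es" for i
  proof -
    have "length (?ws ! i) \<le> len_above \<Gamma> V (ts ! i) \<mu> + pos_cost (pos_const ar sem) (es ! i)"
      using TOp.IH i TOp.prems nth_mem by fastforce
    moreover have "ts ! length es \<le> ts ! i" using typed_op(2) TOp.hyps(3) i by auto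
    then have "len_above \<Gamma> V (ts ! i) \<mu> \<le> ?L" using len_above_antimono[OF TOp.prems(3)] by blast
    moreover have "pos_cost (pos_const ar sem) (es ! i) \<le> ?A"
      using i by (intro member_le_sum_list) auto
    ultimately show ?thesis by linarith
  qed
  have "maxlen ?ws \<le> ?L + ?A"
    using args by (intro maxlen_le) (auto simp: in_set_conv_nth)
  moreover from typed_op(3) have "op_neutral zero one ar sem op \<or> op_positive ar sem op" by blast
  then have "length (sem op ?ws) \<le> maxlen ?ws + pos_const ar sem op + 1"
    using length_sem_neutral[of zero one ar sem op ?ws] length_sem_le_pos_const[of ar sem op ?ws] lws
    by fastforce
  ultimately show ?case by simp
next
  case (TDcl ti to e1 \<tau>1 e2 \<tau>)
  have "length (eval one sem \<mu> e2) \<le> len_above \<Gamma> V to \<mu> + pos_cost (pos_const ar sem) e2"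
    using TDcl by auto
  moreover have "len_above \<Gamma> V to \<mu> \<le> len_above \<Gamma> V \<tau> \<mu>"
    using len_above_antimono[OF TDcl.prems(3)] TDcl.hyps by auto
  ultimately show ?case by simp
qed

lemma subword_refl: "subword u u"
  unfolding subword_def by (metis append.left_neutral append_Nil2)

lemma subword_trans: "subword u v \<Longrightarrow> subword v w \<Longrightarrow> subword u w"
  unfolding subword_def by (metis append.assoc)

lemma subword_singleton: "subword u [a] \<Longrightarrow> u = [] \<or> u = [a]"
  unfolding subword_def by (auto simp: append_eq_Cons_conv Cons_eq_append_conv)

lemma subword_replicate: "subword u (replicate k a) \<Longrightarrow> u = replicate (length u) a \<and> length u \<le> k"
proof -
  assume "subword u (replicate k a)"
  then obtain p q where pq: "replicate k a = p @ u @ q" unfolding subword_def by blast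
  then have "set u \<subseteq> set (replicate k a)" by (metis Un_upper1 Un_upper2 set_append subset_trans)
  then have "set u \<subseteq> {a}" by (auto simp: set_replicate_conv_if split: if_splits)
  then have "u = replicate (length u) a" by (metis replicate_length_same singletonD subsetD)
  moreover have "length u \<le> k" using arg_cong[OF pq, of length] by simp
  ultimately show ?thesis by blast
qed

lemma subwords_subset: "{u. subword u w} \<subseteq> (\<lambda>(i, j). take j (drop i w)) ` ({..length w} \<times> {..length w})"
proof
  fix u assume "u \<in> {u. subword u w}"
  then obtain p q where w: "w = p @ u @ q" unfolding subword_def by blast
  then show "u \<in> (\<lambda>(i, j). take j (drop i w)) ` ({..length w} \<times> {..length w})"
    by (intro image_eqI[of _ _ "(length p, length u)"]) auto
qed

lemma finite_subwords: "finite {u. subword u w}"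
  by (rule finite_subset[OF subwords_subset]) auto

lemma card_subwords: "card {u. subword u w} \<le> (length w + 1) ^ 2"
proof -
  have "card {u. subword u w} \<le> card ((\<lambda>(i, j). take j (drop i w)) ` ({..length w} \<times> {..length w}))"
    by (rule card_mono[OF _ subwords_subset]) auto
  also have "\<dots> \<le> card ({..length w} \<times> {..length w})" by (rule card_image_le) auto
  also have "\<dots> = (length w + 1) ^ 2" by (simp add: card_cartesian_product power2_eq_square)
  finally show ?thesis .
qed

text \<open>All values that variables of level \<open>\<ge> \<tau>\<close> can take inside a loop of level \<open>\<tau>\<close>
  started in \<open>\<mu>\<^sub>0\<close>: subwords of their initial values, the booleans, and declassified
  lengths \<open>1\<^sup>k\<close>. Its size is polynomial in the length of the level-\<open>\<tau>\<close> data of \<open>\<mu>\<^sub>0\<close>.\<close>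
definition value_pool :: "'a \<Rightarrow> 'a \<Rightarrow> (var \<Rightarrow> nat) \<Rightarrow> var set \<Rightarrow> nat \<Rightarrow> 'a store \<Rightarrow> 'a word set"
  where "value_pool zero one \<Gamma> V \<tau> \<mu>0 = (\<Union>x\<in>{x\<in>V. \<tau> \<le> \<Gamma> x}. {u. subword u (\<mu>0 x)})
    \<union> {[zero], [one]} \<union> (\<lambda>k. replicate k one) ` {..len_above \<Gamma> V \<tau> \<mu>0}"

lemma length_le_value_pool:
  assumes "finite V" "u \<in> value_pool zero one \<Gamma> V \<tau> \<mu>0"
  shows "length u \<le> max 1 (len_above \<Gamma> V \<tau> \<mu>0)"
  using assms(2) len_above_ge[OF assms(1)] length_subword unfolding value_pool_def
  by (fastforce intro: le_trans)

lemma closed_value_pool: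
  assumes "finite V"
  shows "closed_value_set zero one (value_pool zero one \<Gamma> V \<tau> \<mu>0)"
proof -
  let ?S = "value_pool zero one \<Gamma> V \<tau> \<mu>0" and ?B = "len_above \<Gamma> V \<tau> \<mu>0"
  have bits: "[zero] \<in> ?S" "[one] \<in> ?S" unfolding value_pool_def by auto
  have ones: "replicate k one \<in> ?S" if "k \<le> ?B" for k
    using that unfolding value_pool_def by blast
  have empty: "[] \<in> ?S" using ones[of 0] by simp
  have subwords: "u \<in> ?S" if v: "v \<in> ?S" and u: "subword u v" for u v
    using v[unfolded value_pool_def]
  proof (elim UnE)
    assume "v \<in> (\<Union>x\<in>{x\<in>V. \<tau> \<le> \<Gamma> x}. {u. subword u (\<mu>0 x)})"
    then obtain x where "x \<in> V" "\<tau> \<le> \<Gamma> x" "subword v (\<mu>0 x)" by blast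
    moreover from this(3) have "subword u (\<mu>0 x)" by (rule subword_trans[OF u])
    ultimately show ?thesis unfolding value_pool_def by (intro UnI1 UN_I[of x]) auto
  next
    assume "v \<in> {[zero], [one]}"
    then obtain c where "v = [c]" by blast
    with u have "subword u [c]" by simp
    then have "u = [] \<or> u = v" unfolding \<open>v = [c]\<close> by (rule subword_singleton)
    then show ?thesis using empty v by (elim disjE) simp_all
  next
    assume "v \<in> (\<lambda>k. replicate k one) ` {..?B}"
    then obtain k where "k \<le> ?B" "v = replicate k one" by blast
    then have "subword u (replicate k one)" using u by simp
    note u_ones = subword_replicate[OF this]
    then have "length u \<le> ?B" using \<open>k \<le> ?B\<close> by linarith
    from ones[OF this] show ?thesis by (subst u_ones[THEN conjunct1])
  qed
  have prefix_ones: "replicate k one \<in> ?S" if "v \<in> ?S" "k \<le> length v" for v k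
  proof (cases "k \<le> ?B")
    case False
    then have "k = 0 \<or> k = 1" using length_le_value_pool[OF assms that(1)] that(2) by linarith
    then show ?thesis using empty bits by (elim disjE) simp_all
  qed (rule ones)
  show ?thesis
    unfolding closed_value_set_def
  proof (intro conjI ballI allI impI)
    show "[zero] \<in> ?S" "[one] \<in> ?S" by (fact bits)+
  next
    fix v u assume "v \<in> ?S" "subword u v"
    then show "u \<in> ?S" by (rule subwords)
  next
    fix v k assume "v \<in> ?S" "k \<le> length v"
    then show "replicate k one \<in> ?S" by (rule prefix_ones)
  qed
qed

lemma high_in_value_pool: "high_in \<Gamma> V \<tau> (value_pool zero one \<Gamma> V \<tau> \<mu>0) \<mu>0"
  unfolding high_in_def value_pool_def using subword_refl by blast

lemma card_value_pool:
  assumes "finite V"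
  shows "finite (value_pool zero one \<Gamma> V \<tau> \<mu>0)"
    "card (value_pool zero one \<Gamma> V \<tau> \<mu>0) \<le> card V * (len_above \<Gamma> V \<tau> \<mu>0 + 1) ^ 2 + len_above \<Gamma> V \<tau> \<mu>0 + 3"
proof -
  let ?B = "len_above \<Gamma> V \<tau> \<mu>0" and ?V = "{x\<in>V. \<tau> \<le> \<Gamma> x}"
  let ?X = "\<Union>x\<in>?V. {u. subword u (\<mu>0 x)}"
  have "finite ?V" using assms by simp
  have "card ?X \<le> (\<Sum>x\<in>?V. card {u. subword u (\<mu>0 x)})" by (rule card_UN_le[OF \<open>finite ?V\<close>])
  also have "\<dots> \<le> (\<Sum>x\<in>?V. (?B + 1) ^ 2)"
  proof (rule sum_mono)
    fix x assume "x \<in> ?V"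
    then have "length (\<mu>0 x) \<le> ?B" using len_above_ge[OF assms] by blast
    then have "(length (\<mu>0 x) + 1) ^ 2 \<le> (?B + 1) ^ 2" by (simp add: power_mono)
    then show "card {u. subword u (\<mu>0 x)} \<le> (?B + 1) ^ 2" using card_subwords le_trans by blast
  qed
  also have "\<dots> \<le> card V * (?B + 1) ^ 2"
    using card_mono[OF assms, of ?V] by (simp add: mult_le_mono1)
  finally have card_X: "card ?X \<le> card V * (?B + 1) ^ 2" .
  have "card (value_pool zero one \<Gamma> V \<tau> \<mu>0)
      \<le> card ?X + card {[zero], [one]} + card ((\<lambda>k. replicate k one) ` {..?B})"
    unfolding value_pool_def by (meson card_Un_le add_le_mono1 le_trans)
  also have "\<dots> \<le> card ?X + 2 + (?B + 1)"
  proof -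
    have "card {[zero], [one]} \<le> 2" by (simp add: card_insert_le_m1)
    then show ?thesis using card_image_le[of "{..?B}" "\<lambda>k. replicate k one"] by simp
  qed
  finally show "card (value_pool zero one \<Gamma> V \<tau> \<mu>0) \<le> card V * (?B + 1) ^ 2 + ?B + 3"
    using card_X by linarith
  show "finite (value_pool zero one \<Gamma> V \<tau> \<mu>0)"
    unfolding value_pool_def using \<open>finite ?V\<close> finite_subwords by blast
qed

text \<open>\<open>g i\<close> is the store before the \<open>i\<close>-th of \<open>m\<close> executions of the loop body; all but
  possibly the last one end normally, the last may break.\<close>
definition loop_iters :: "'a \<Rightarrow> ('op \<Rightarrow> 'a word list \<Rightarrow> 'a word) \<Rightarrow> 'op expr \<Rightarrow> 'op stmt
    \<Rightarrow> nat \<Rightarrow> (nat \<Rightarrow> 'a store) \<Rightarrow> bool" where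
  "loop_iters one sem e a m g \<longleftrightarrow> (\<forall>i<m. eval one sem (g i) e = [one] \<and>
     (\<exists>b. big_step one sem (g i, a) (b, g (Suc i))) \<and>
     (Suc i < m \<longrightarrow> big_step one sem (g i, a) (True, g (Suc i))))"

lemma loop_iters_Cons:
  assumes "eval one sem \<mu> e = [one]" "big_step one sem (\<mu>, a) (True, g 0)" "loop_iters one sem e a m g"
  shows "loop_iters one sem e a (Suc m) (case_nat \<mu> g)"
  unfolding loop_iters_def
proof (intro allI impI)
  fix i assume "i < Suc m"
  then show "eval one sem (case_nat \<mu> g i) e = [one] \<and>
      (\<exists>b. big_step one sem (case_nat \<mu> g i, a) (b, case_nat \<mu> g (Suc i))) \<and>
      (Suc i < Suc m \<longrightarrow> big_step one sem (case_nat \<mu> g i, a) (True, case_nat \<mu> g (Suc i)))"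
    using assms unfolding loop_iters_def by (cases i) auto
qed

lemma big_step_loop_iters:
  assumes "big_step one sem c r"
  shows "(\<forall>\<mu> e a. c = (\<mu>, While e a) \<longrightarrow>
            (\<exists>m g. g 0 = \<mu> \<and> g m = snd r \<and> loop_iters one sem e a m g)) \<and>
         (\<forall>\<mu> e a. c = (\<mu>, Seq a (While e a)) \<longrightarrow> eval one sem \<mu> e = [one] \<longrightarrow>
            (\<exists>m g. g 0 = \<mu> \<and> g m = snd r \<and> loop_iters one sem e a m g))"
  using assms
proof (induction rule: big_step.induct)
  case (BSeqBot \<mu> s1 \<mu>1 s2)
  have "loop_iters one sem e s1 1 (\<lambda>i. if i = 0 then \<mu> else \<mu>1)" if "eval one sem \<mu> e = [one]" for e
    using that BSeqBot.hyps unfolding loop_iters_def by auto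
  then show ?case
    by (intro conjI allI impI, simp) (intro exI[of _ 1] exI[of _ "\<lambda>i. if i = 0 then \<mu> else \<mu>1"], auto)
next
  case (BSeq \<mu> s1 \<mu>1 s2 b \<mu>2)
  have "\<exists>m g. g 0 = \<mu> \<and> g m = \<mu>2 \<and> loop_iters one sem e s1 m g"
    if loop: "s2 = While e s1" and guard: "eval one sem \<mu> e = [one]" for e
  proof -
    obtain m g where "g 0 = \<mu>1" "g m = \<mu>2" "loop_iters one sem e s1 m g"
      using BSeq.IH(2)[THEN conjunct1, rule_format, of \<mu>1 e s1] loop by auto
    then show ?thesis
      using loop_iters_Cons[OF guard, of s1 g m] BSeq.hyps(1) by (intro exI[of _ "Suc m"] exI[of _ "case_nat \<mu> g"]) auto
  qed
  then show ?case by auto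
next
  case (BWhileF \<mu> e s)
  have "loop_iters one sem e s 0 (\<lambda>_. \<mu>)" unfolding loop_iters_def by simp
  then show ?case by (intro conjI allI impI, fastforce) simp
qed auto

lemma big_step_While_loop_iters:
  assumes "big_step one sem (\<mu>, While e a) (b, \<mu>')"
  obtains m g where "g 0 = \<mu>" "g m = \<mu>'" "loop_iters one sem e a m g"
  using big_step_loop_iters[OF assms] that by auto

lemma loop_iters_tranclp_step:
  assumes "loop_iters one sem e a m g" "Suc i < m"
  shows "(tree_child one sem)\<^sup>+\<^sup>+ (g i, While e a) (g (Suc i), While e a)"
proof -
  have "eval one sem (g i) e = [one]" "big_step one sem (g i, a) (True, g (Suc i))"
    using assms unfolding loop_iters_def by auto
  then show ?thesis by (meson CSeq2 CWhile tranclp.r_into_trancl tranclp.trancl_into_trancl)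
qed

lemma loop_iters_tranclp:
  assumes "loop_iters one sem e a m g" "i < j" "j < m"
  shows "(tree_child one sem)\<^sup>+\<^sup>+ (g i, While e a) (g j, While e a)"
  using assms(2,3)
proof (induction j)
  case (Suc j)
  note step = loop_iters_tranclp_step[OF assms(1), of j]
  show ?case
  proof (cases "i = j")
    case False
    then have "(tree_child one sem)\<^sup>+\<^sup>+ (g i, While e a) (g j, While e a)" using Suc by simp
    then show ?thesis using step Suc.prems by (meson tranclp_trans)
  qed (use step Suc.prems in simp)
qed simp

lemma len_above_upd:
  assumes "finite V" "x \<in> V \<Longrightarrow> j \<le> \<Gamma> x \<Longrightarrow> length w \<le> len_above \<Gamma> V j \<mu> + c"
  shows "len_above \<Gamma> V j (\<mu>(x := w)) \<le> len_above \<Gamma> V j \<mu> + c"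
proof (rule len_above_le[OF assms(1)])
  fix y assume y: "y \<in> V" "j \<le> \<Gamma> y"
  show "length ((\<mu>(x := w)) y) \<le> len_above \<Gamma> V j \<mu> + c"
  proof (cases "y = x")
    case False
    then show ?thesis using len_above_ge[of V y j \<Gamma> \<mu>, OF assms(1) y] by simp
  qed (use y assms(2) in simp)
qed

inductive_cases big_step_SkipE: "big_step one sem (\<mu>, Skip) r"
inductive_cases big_step_AssignE: "big_step one sem (\<mu>, Assign x e) r"
inductive_cases big_step_SeqE: "big_step one sem (\<mu>, Seq s1 s2) r"
inductive_cases big_step_IfE: "big_step one sem (\<mu>, If e s1 s2) r"

lemma big_step_Seq_cases:
  assumes "big_step one sem (\<mu>, Seq s1 s2) (b, \<mu>')"
  obtains (Break) "big_step one sem (\<mu>, s1) (False, \<mu>')"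
    | (Normal) \<mu>1 where "big_step one sem (\<mu>, s1) (True, \<mu>1)" "big_step one sem (\<mu>1, s2) (b, \<mu>')"
  using assms by (auto elim: big_step_SeqE)

lemma big_step_If_cases:
  assumes "big_step one sem (\<mu>, If e s1 s2) (b, \<mu>')"
  obtains (Then) "eval one sem \<mu> e = [one]" "big_step one sem (\<mu>, s1) (b, \<mu>')"
    | (Else) "eval one sem \<mu> e \<noteq> [one]" "big_step one sem (\<mu>, s2) (b, \<mu>')"
  using assms by (auto elim: big_step_IfE)
inductive_cases big_step_BreakE: "big_step one sem (\<mu>, Break e) r"

lemma safe_op_poly_bounded:
  assumes "safe_env zero one ar sem \<Delta>" "\<Delta> op = Some D"
  obtains h where "poly_bounded h" "\<And>ws. length ws = ar op \<Longrightarrow> length (sem op ws) \<le> h (maxlen ws)"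
proof -
  have "op_neutral zero one ar sem op \<or> op_positive ar sem op \<or> op_polynomial ar sem op"
    using assms unfolding safe_env_def by blast
  then show ?thesis
  proof (elim disjE)
    assume "op_neutral zero one ar sem op"
    then have "length (sem op ws) \<le> maxlen ws + 1" if "length ws = ar op" for ws
      using that by (rule length_sem_neutral)
    then show ?thesis
      using that[OF poly_bounded_add[OF poly_bounded_id poly_bounded_const[of 1]]] by blast
  next
    assume "op_positive ar sem op"
    then show ?thesis
      using that[OF poly_bounded_add[OF poly_bounded_id poly_bounded_const[of "pos_const ar sem op"]]]
        length_sem_le_pos_const[of ar sem op] by blast
  next
    assume "op_polynomial ar sem op"
    then obtain p :: "nat poly"
      where p: "\<And>ws. length ws = ar op \<Longrightarrow> length (sem op ws) \<le> poly p (maxlen ws)"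
      unfolding op_polynomial_def by blast
    obtain h where "poly_bounded h" "\<And>z. poly p z \<le> h z" by (rule poly_bounded_poly[of p]) blast
    then show ?thesis using that[of h] p le_trans by blast
  qed
qed

locale safe_aperiodic =
  fixes zero one :: "'a::countable" and ar :: "'op \<Rightarrow> nat"
    and sem :: "'op \<Rightarrow> 'a word list \<Rightarrow> 'a word"
    and \<Gamma> :: "var \<Rightarrow> nat" and \<Delta> :: "'op openv" and root :: "'op stmt"
  assumes safe: "safe_env zero one ar sem \<Delta>"
    and aperiodic: "aperiodic one sem root"
begin

abbreviation "V \<equiv> svars root"
abbreviation "L j \<mu> \<equiv> len_above \<Gamma> V j \<mu>"
abbreviation "rch c \<equiv> reachable one sem root c"

lemma finite_V: "finite V"
  by (rule finite_svars)

lemma rch_svars: "rch (\<mu>, s) \<Longrightarrow> svars s \<subseteq> V"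
  using reachable_svars by fastforce

lemma rch_Seq1: "rch (\<mu>, Seq s1 s2) \<Longrightarrow> rch (\<mu>, s1)"
  by (erule reachable_step) (rule CSeq1)

lemma rch_Seq2: "rch (\<mu>, Seq s1 s2) \<Longrightarrow> big_step one sem (\<mu>, s1) (True, \<mu>1) \<Longrightarrow> rch (\<mu>1, s2)"
  by (erule reachable_step) (erule CSeq2)

lemma rch_IfT: "rch (\<mu>, If e s1 s2) \<Longrightarrow> eval one sem \<mu> e = [one] \<Longrightarrow> rch (\<mu>, s1)"
  by (erule reachable_step) (erule CIfT)

lemma rch_IfF: "rch (\<mu>, If e s1 s2) \<Longrightarrow> eval one sem \<mu> e \<noteq> [one] \<Longrightarrow> rch (\<mu>, s2)"
  by (erule reachable_step) (erule CIfF)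

lemma rch_While: "rch (\<mu>, While e a) \<Longrightarrow> eval one sem \<mu> e = [one] \<Longrightarrow> rch (\<mu>, Seq a (While e a))"
  by (erule reachable_step) (erule CWhile)

lemma loop_iters_rch:
  assumes "rch (g 0, While e a)" "loop_iters one sem e a m g" "i < m"
  shows "rch (g i, While e a)" "rch (g i, a)"
proof -
  show loop: "rch (g i, While e a)"
  proof (cases "i = 0")
    case False
    then have "(tree_child one sem)\<^sup>+\<^sup>+ (g 0, While e a) (g i, While e a)"
      using loop_iters_tranclp[OF assms(2), of 0 i] assms(3) by simp
    then show ?thesis by (rule reachable_trancl[OF assms(1)])
  qed (use assms in simp)
  have "eval one sem (g i) e = [one]" using assms(2,3) unfolding loop_iters_def by blast
  with loop show "rch (g i, a)" by (blast intro: rch_Seq1 rch_While)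
qed

lemma loop_iters_differ:
  assumes "rch (g 0, While e a)" "loop_iters one sem e a m g" "i < j" "j < m"
  shows "\<exists>x\<in>U e. g i x \<noteq> g j x"
  using aperiodicD[OF aperiodic loop_iters_rch(1)[OF assms(1,2)] loop_iters_tranclp[OF assms(2-4)]]
    assms(3,4) by simp

lemma loop_iters_high_in:
  assumes "rch (g 0, While e a)" "loop_iters one sem e a m g"
    and "sty ar \<Gamma> \<Delta> \<tau> T a \<tau>" "1 \<le> \<tau>" "\<tau> \<le> T"
  shows "i \<le> m \<Longrightarrow> high_in \<Gamma> V \<tau> (value_pool zero one \<Gamma> V \<tau> (g 0)) (g i)"
proof (induction i)
  case 0
  show ?case by (rule high_in_value_pool)
next
  case (Suc i)
  then have "i < m" by simp
  then obtain b where run: "big_step one sem (g i, a) (b, g (Suc i))"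
    using assms(2) unfolding loop_iters_def by blast
  have "svars a \<subseteq> V" using rch_svars[OF loop_iters_rch(2)[OF assms(1,2) \<open>i < m\<close>]] .
  then show ?case
    using big_step_high_in[OF run safe closed_value_pool[OF finite_V] assms(4,5)] assms(3)
      Suc.IH \<open>i < m\<close> by simp
qed

definition iteration_bound :: "'op expr \<Rightarrow> nat \<Rightarrow> nat" where
  "iteration_bound e y = (card V * (y + 1) ^ 2 + y + 3) ^ card (U e)"

lemma poly_bounded_iteration_bound: "poly_bounded (iteration_bound e)"
  unfolding iteration_bound_def[abs_def]
  by (intro poly_bounded_power poly_bounded_add poly_bounded_mult poly_bounded_const
      poly_bounded_Suc_power poly_bounded_id)

text \<open>By aperiodicity the loop states differ on \<open>U e\<close>, whose variables stay in the value
  pool.\<close>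
lemma loop_iters_count:
  assumes "rch (g 0, While e a)" "loop_iters one sem e a m g"
    and "ety ar \<Gamma> \<Delta> \<tau> T e \<tau>" "sty ar \<Gamma> \<Delta> \<tau> T a \<tau>" "1 \<le> \<tau>" "\<tau> \<le> T"
  shows "m \<le> iteration_bound e (L \<tau> (g 0))"
proof -
  let ?S = "value_pool zero one \<Gamma> V \<tau> (g 0)"
  note pool = card_value_pool[OF finite_V, of zero one \<Gamma> \<tau> "g 0"]
  have "card {..<m} \<le> card ?S ^ card (U e)"
  proof (rule card_le_if_restrictions_differ(2)[OF finite_U pool(1)])
    fix i x assume "i \<in> {..<m}" "x \<in> U e"
    moreover have "x \<in> V" using \<open>x \<in> U e\<close> U_subset_evars rch_svars[OF assms(1)] by auto
    moreover have "\<tau> \<le> \<Gamma> x" using ety_U_level[OF assms(3) safe _ \<open>x \<in> U e\<close>] assms(5,6) by simp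
    ultimately show "g i x \<in> ?S"
      using loop_iters_high_in[OF assms(1,2,4-6), of i] unfolding high_in_def by simp
  next
    fix i j assume "i \<in> {..<m}" "j \<in> {..<m}" "i \<noteq> j"
    then show "\<exists>x\<in>U e. g i x \<noteq> g j x"
      using loop_iters_differ[OF assms(1,2)] by (metis lessThan_iff linorder_neqE_nat)
  qed
  also have "\<dots> \<le> (card V * (L \<tau> (g 0) + 1) ^ 2 + L \<tau> (g 0) + 3) ^ card (U e)"
    using pool(2) by (rule power_mono) simp
  finally show ?thesis unfolding iteration_bound_def by simp
qed

lemma loop_iters_len_high:
  assumes "rch (g 0, While e a)" "loop_iters one sem e a m g"
    and "sty ar \<Gamma> \<Delta> \<tau> T a \<tau>" "1 \<le> \<tau>" "\<tau> \<le> T" "i \<le> m" "\<tau> \<le> k"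
  shows "L k (g i) \<le> max 1 (L \<tau> (g 0))"
proof (rule len_above_le[OF finite_V])
  fix x assume "x \<in> V" "k \<le> \<Gamma> x"
  then have "g i x \<in> value_pool zero one \<Gamma> V \<tau> (g 0)"
    using loop_iters_high_in[OF assms(1-6)] assms(7) unfolding high_in_def by simp
  then show "length (g i x) \<le> max 1 (L \<tau> (g 0))" by (rule length_le_value_pool[OF finite_V])
qed

text \<open>Below the loop level each iteration adds the body's growth; \<open>iterated_level_bound\<close>
  sums these increments up level by level.\<close>
lemma loop_iters_len_low:
  assumes rch: "rch (g 0, While e a)" and iters: "loop_iters one sem e a m g"
    and te: "ety ar \<Gamma> \<Delta> \<tau> T e \<tau>" and ta: "sty ar \<Gamma> \<Delta> \<tau> T a \<tau>" and \<tau>: "1 \<le> \<tau>" "\<tau> \<le> T"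
    and "mono pa"
    and body: "\<And>\<mu> b \<mu>' j. rch (\<mu>, a) \<Longrightarrow> big_step one sem (\<mu>, a) (b, \<mu>') \<Longrightarrow>
      L j \<mu>' \<le> L j \<mu> + pa (L (Suc j) \<mu>)"
    and "k < \<tau>"
  shows "L k (g m) \<le> L k (g 0) +
    iter_bound pa T (iteration_bound e (L (Suc k) (g 0) + 1) + 1) (L (Suc k) (g 0) + 1)"
proof -
  let ?B = "L \<tau> (g 0)" and ?Y = "L (Suc k) (g 0) + 1"
  have B_le: "?B \<le> L (Suc k) (g 0)"
    using len_above_antimono[OF finite_V, of "Suc k" \<tau> \<Gamma> "g 0"] \<open>k < \<tau>\<close> by simp
  have "L k (g m) \<le> L k (g 0) + iter_bound pa T m ?Y"
  proof (rule iterated_level_bound[where x = "\<lambda>i k. L k (g i)" and K = \<tau> and C = "max 1 ?B"])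
    show "L k (g (Suc i)) \<le> L k (g i) + pa (L (Suc k) (g i))" if "i < m" for i k
      using iters that body[OF loop_iters_rch(2)[OF rch iters that]] unfolding loop_iters_def by blast
    show "L k (g i) \<le> max 1 ?B" if "i \<le> m" "\<tau> \<le> k" for i k
      by (rule loop_iters_len_high[OF rch iters ta \<tau> that])
    show "L k' (g 0) \<le> ?Y" if "k < k'" for k'
      using len_above_antimono[OF finite_V, of "Suc k" k' \<Gamma> "g 0"] that by simp
  qed (use \<open>mono pa\<close> B_le \<tau> in simp_all)
  also have "iter_bound pa T m ?Y \<le> iter_bound pa T (iteration_bound e ?Y + 1) ?Y"
  proof -
    have "m \<le> iteration_bound e ?B" by (rule loop_iters_count[OF rch iters te ta \<tau>])
    also have "\<dots> \<le> iteration_bound e ?Y"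
      using B_le by (intro poly_bounded_mono[OF poly_bounded_iteration_bound]) simp
    finally show ?thesis using iter_bound_mono[OF \<open>mono pa\<close>] by simp
  qed
  finally show ?thesis by simp
qed

definition level_growth :: "'op stmt \<Rightarrow> bool" where
  "level_growth s \<longleftrightarrow> (\<exists>p. poly_bounded p \<and> (\<forall>\<mu> b \<mu>' j. rch (\<mu>, s) \<longrightarrow>
      big_step one sem (\<mu>, s) (b, \<mu>') \<longrightarrow> L j \<mu>' \<le> L j \<mu> + p (L (Suc j) \<mu>)))"

lemma level_growthI:
  assumes "poly_bounded p"
    and "\<And>\<mu> b \<mu>' j. rch (\<mu>, s) \<Longrightarrow> big_step one sem (\<mu>, s) (b, \<mu>') \<Longrightarrow> L j \<mu>' \<le> L j \<mu> + p (L (Suc j) \<mu>)"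
  shows "level_growth s"
  unfolding level_growth_def using assms by blast

lemma level_growth_Skip: "level_growth Skip"
  by (rule level_growthI[OF poly_bounded_const[of 0]]) (auto elim: big_step_SkipE)

lemma level_growth_Break: "level_growth (Break e)"
  by (rule level_growthI[OF poly_bounded_const[of 0]]) (auto elim: big_step_BreakE)

lemma level_growth_Assign:
  assumes "1 \<le> T" "sty ar \<Gamma> \<Delta> ti T (Assign x e) \<sigma>"
  shows "level_growth (Assign x e)"
proof -
  obtain \<rho> where ty: "ety ar \<Gamma> \<Delta> ti T e \<rho>" "\<Gamma> x \<le> \<rho>"
    using assms by (auto elim: sty_AssignE)
  let ?A = "pos_cost (pos_const ar sem) e"
  show ?thesis
  proof (rule level_growthI[OF poly_bounded_const[of ?A]])
    fix \<mu> b \<mu>' j assume r: "rch (\<mu>, Assign x e)" "big_step one sem (\<mu>, Assign x e) (b, \<mu>')"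
    have "evars e \<subseteq> V" using rch_svars[OF r(1)] by auto
    then have len: "length (eval one sem \<mu> e) \<le> L \<rho> \<mu> + ?A"
      using length_eval_le[OF ty(1) safe _ finite_V] assms(1) by auto
    have "L j (\<mu>(x := eval one sem \<mu> e)) \<le> L j \<mu> + ?A"
    proof (rule len_above_upd[OF finite_V])
      assume "j \<le> \<Gamma> x"
      then show "length (eval one sem \<mu> e) \<le> L j \<mu> + ?A"
        using len len_above_antimono[OF finite_V, of j \<rho> \<Gamma> \<mu>] ty(2) by simp
    qed
    then show "L j \<mu>' \<le> L j \<mu> + ?A" using r(2) by (auto elim: big_step_AssignE)
  qed
qed

lemma level_growth_Seq:
  assumes "level_growth s1" "level_growth s2"
  shows "level_growth (Seq s1 s2)"
proof -
  obtain p1 where p1: "poly_bounded p1"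
    "\<And>\<mu> b \<mu>' j. rch (\<mu>, s1) \<Longrightarrow> big_step one sem (\<mu>, s1) (b, \<mu>') \<Longrightarrow> L j \<mu>' \<le> L j \<mu> + p1 (L (Suc j) \<mu>)"
    using assms(1) unfolding level_growth_def by blast
  obtain p2 where p2: "poly_bounded p2"
    "\<And>\<mu> b \<mu>' j. rch (\<mu>, s2) \<Longrightarrow> big_step one sem (\<mu>, s2) (b, \<mu>') \<Longrightarrow> L j \<mu>' \<le> L j \<mu> + p2 (L (Suc j) \<mu>)"
    using assms(2) unfolding level_growth_def by blast
  show ?thesis
  proof (rule level_growthI)
    show "poly_bounded (\<lambda>y. p1 y + p2 (y + p1 y))"
      by (intro poly_bounded_add p1(1) poly_bounded_comp[OF p2(1)] poly_bounded_id)
  next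
    fix \<mu> b \<mu>' j assume r: "rch (\<mu>, Seq s1 s2)" "big_step one sem (\<mu>, Seq s1 s2) (b, \<mu>')"
    let ?y = "L (Suc j) \<mu>"
    from r(2) show "L j \<mu>' \<le> L j \<mu> + (p1 ?y + p2 (?y + p1 ?y))"
    proof (cases rule: big_step_Seq_cases)
      case Break
      then show ?thesis using p1(2)[OF rch_Seq1[OF r(1)], of False \<mu>' j] by simp
    next
      case (Normal \<mu>1)
      have "L (Suc (Suc j)) \<mu> \<le> ?y" by (rule len_above_antimono[OF finite_V]) simp
      then have "L (Suc j) \<mu>1 \<le> ?y + p1 ?y"
        using p1(2)[OF rch_Seq1[OF r(1)] Normal(1), of "Suc j"] poly_bounded_mono[OF p1(1)] by fastforce
      then have "p2 (L (Suc j) \<mu>1) \<le> p2 (?y + p1 ?y)" by (rule poly_bounded_mono[OF p2(1)])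
      then show ?thesis
        using p1(2)[OF rch_Seq1[OF r(1)] Normal(1), of j] p2(2)[OF rch_Seq2[OF r(1) Normal(1)] Normal(2), of j]
        by linarith
    qed
  qed
qed

lemma level_growth_If:
  assumes "level_growth s1" "level_growth s2"
  shows "level_growth (If e s1 s2)"
proof -
  obtain p1 where p1: "poly_bounded p1"
    "\<And>\<mu> b \<mu>' j. rch (\<mu>, s1) \<Longrightarrow> big_step one sem (\<mu>, s1) (b, \<mu>') \<Longrightarrow> L j \<mu>' \<le> L j \<mu> + p1 (L (Suc j) \<mu>)"
    using assms(1) unfolding level_growth_def by blast
  obtain p2 where p2: "poly_bounded p2"
    "\<And>\<mu> b \<mu>' j. rch (\<mu>, s2) \<Longrightarrow> big_step one sem (\<mu>, s2) (b, \<mu>') \<Longrightarrow> L j \<mu>' \<le> L j \<mu> + p2 (L (Suc j) \<mu>)"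
    using assms(2) unfolding level_growth_def by blast
  show ?thesis
  proof (rule level_growthI[OF poly_bounded_add[OF p1(1) p2(1)]])
    fix \<mu> b \<mu>' j assume r: "rch (\<mu>, If e s1 s2)" "big_step one sem (\<mu>, If e s1 s2) (b, \<mu>')"
    from r(2) show "L j \<mu>' \<le> L j \<mu> + (p1 (L (Suc j) \<mu>) + p2 (L (Suc j) \<mu>))"
    proof (cases rule: big_step_If_cases)
      case Then
      then show ?thesis using p1(2)[OF rch_IfT[OF r(1)], of b \<mu>' j] by simp
    next
      case Else
      then show ?thesis using p2(2)[OF rch_IfF[OF r(1)], of b \<mu>' j] by simp
    qed
  qed
qed

text \<open>Inside a loop of level \<open>\<tau>\<close> the data of level \<open>> \<tau>\<close> is not modified and that of
  level \<open>\<tau>\<close> stays in the value pool.\<close>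
lemma level_growth_While:
  assumes te: "ety ar \<Gamma> \<Delta> \<tau> T e \<tau>" and ta: "sty ar \<Gamma> \<Delta> \<tau> T a \<tau>" and \<tau>: "1 \<le> \<tau>" "\<tau> \<le> T"
    and "level_growth a"
  shows "level_growth (While e a)"
proof -
  obtain pa where pa: "poly_bounded pa"
    "\<And>\<mu> b \<mu>' j. rch (\<mu>, a) \<Longrightarrow> big_step one sem (\<mu>, a) (b, \<mu>') \<Longrightarrow> L j \<mu>' \<le> L j \<mu> + pa (L (Suc j) \<mu>)"
    using \<open>level_growth a\<close> unfolding level_growth_def by blast
  define p where "p = (\<lambda>y. iter_bound pa T (iteration_bound e (y + 1) + 1) (y + 1) + 1)"
  have "poly_bounded (\<lambda>y. iteration_bound e (y + 1) + 1)"
    by (intro poly_bounded_add poly_bounded_comp[OF poly_bounded_iteration_bound]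
        poly_bounded_id poly_bounded_const)
  then have p: "poly_bounded p"
    unfolding p_def by (rule poly_bounded_add[OF poly_bounded_iter_bound[OF pa(1)] poly_bounded_const])
  show ?thesis
  proof (rule level_growthI[OF p])
    fix \<mu>0 b \<mu>' k assume r: "rch (\<mu>0, While e a)" "big_step one sem (\<mu>0, While e a) (b, \<mu>')"
    obtain m g where g: "g 0 = \<mu>0" "g m = \<mu>'" and iters: "loop_iters one sem e a m g"
      using r(2) by (rule big_step_While_loop_iters)
    have rch0: "rch (g 0, While e a)" using r(1) g(1) by simp
    consider "k < \<tau>" | "k = \<tau>" | "\<tau> < k" by linarith
    then show "L k \<mu>' \<le> L k \<mu>0 + p (L (Suc k) \<mu>0)"
    proof cases
      case 1
      have "mono pa" using pa(1) unfolding poly_bounded_def by blast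
      have "L k (g m) \<le> L k (g 0) +
          iter_bound pa T (iteration_bound e (L (Suc k) (g 0) + 1) + 1) (L (Suc k) (g 0) + 1)"
        by (rule loop_iters_len_low[OF rch0 iters te ta \<tau> \<open>mono pa\<close> _ 1]) (rule pa(2))
      then show ?thesis using g unfolding p_def by simp
    next
      case 2
      have "L k \<mu>' \<le> max 1 (L \<tau> \<mu>0)" using loop_iters_len_high[OF rch0 iters ta \<tau>, of m k] 2 g by simp
      then show ?thesis using 2 unfolding p_def max_def by (simp split: if_splits)
    next
      case 3
      have "sty ar \<Gamma> \<Delta> \<tau> T (While e a) \<tau>" using te ta \<tau> by (intro TWh)
      then have "\<mu>' x = \<mu>0 x" if "k \<le> \<Gamma> x" for x
        using big_step_unchanged_above[OF r(2)] that 3 by simp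
      then have "L k \<mu>' \<le> L k \<mu>0"
        using len_above_ge[OF finite_V] by (intro len_above_le[OF finite_V]) fastforce
      then show ?thesis by simp
    qed
  qed
qed

theorem sty_level_growth: "1 \<le> T \<Longrightarrow> sty ar \<Gamma> \<Delta> ti T s \<sigma> \<Longrightarrow> level_growth s"
proof (induction s arbitrary: ti \<sigma>)
  case Skip
  show ?case by (rule level_growth_Skip)
next
  case (Break e)
  show ?case by (rule level_growth_Break)
next
  case (Assign x e)
  then show ?case by (rule level_growth_Assign)
next
  case (Seq s1 s2)
  from Seq.prems(2) show ?case by (elim sty_SeqE) (use Seq.IH Seq.prems(1) level_growth_Seq in blast)
next
  case (If e s1 s2)
  from If.prems(2) show ?case by (elim sty_IfE) (use If.IH If.prems(1) level_growth_If in blast)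
next
  case (While e a)
  from While.prems(2) obtain \<tau> T' where "\<tau> \<le> \<sigma>" "1 \<le> \<tau>" "\<tau> \<le> T'" "T = 0 \<or> T' = T"
    "ety ar \<Gamma> \<Delta> \<tau> T' e \<tau>" "sty ar \<Gamma> \<Delta> \<tau> T' a \<tau>"
    by (rule sty_WhileE)
  then show ?case using level_growth_While While.IH While.prems(1) by simp
qed

definition poly_growth :: "'op stmt \<Rightarrow> bool" where
  "poly_growth s \<longleftrightarrow> (\<exists>f. poly_bounded f \<and> (\<forall>\<mu> b \<mu>'. rch (\<mu>, s) \<longrightarrow>
      big_step one sem (\<mu>, s) (b, \<mu>') \<longrightarrow> L 0 \<mu>' \<le> f (L 0 \<mu>)))"

lemma poly_growthI:
  assumes "poly_bounded f"
    and "\<And>\<mu> b \<mu>'. rch (\<mu>, s) \<Longrightarrow> big_step one sem (\<mu>, s) (b, \<mu>') \<Longrightarrow> L 0 \<mu>' \<le> f (L 0 \<mu>)"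
  shows "poly_growth s"
  unfolding poly_growth_def using assms by blast

lemma poly_growth_id: "(\<And>\<mu> b \<mu>'. big_step one sem (\<mu>, s) (b, \<mu>') \<Longrightarrow> \<mu>' = \<mu>) \<Longrightarrow> poly_growth s"
  by (rule poly_growthI[OF poly_bounded_id]) auto

lemma eval_poly_bounded:
  assumes "ety ar \<Gamma> \<Delta> ti to e \<rho>" "evars e \<subseteq> V"
  shows "\<exists>g. poly_bounded g \<and> (\<forall>\<mu>. length (eval one sem \<mu> e) \<le> g (L 0 \<mu>))"
  using assms
proof (induction rule: ety.induct)
  case (TVar x \<tau> ti to)
  then show ?case using len_above_ge[OF finite_V] poly_bounded_id by fastforce
next
  case (TOp op D ts ti to es)
  obtain h where h: "poly_bounded h" "\<And>ws. length ws = ar op \<Longrightarrow> length (sem op ws) \<le> h (maxlen ws)"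
    using safe_op_poly_bounded[OF safe TOp.hyps(1)] by blast
  have "\<forall>i. \<exists>g. i < length es \<longrightarrow> poly_bounded g \<and> (\<forall>\<mu>. length (eval one sem \<mu> (es ! i)) \<le> g (L 0 \<mu>))"
  proof
    fix i
    show "\<exists>g. i < length es \<longrightarrow> poly_bounded g \<and> (\<forall>\<mu>. length (eval one sem \<mu> (es ! i)) \<le> g (L 0 \<mu>))"
    proof (cases "i < length es")
      case True
      then have "evars (es ! i) \<subseteq> V" using TOp.prems nth_mem by fastforce
      then show ?thesis using TOp.IH True by blast
    qed simp
  qed
  from choice[OF this] obtain gs where gs_all:
    "\<forall>i. i < length es \<longrightarrow> poly_bounded (gs i) \<and> (\<forall>\<mu>. length (eval one sem \<mu> (es ! i)) \<le> gs i (L 0 \<mu>))"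
    by blast
  then have gs: "\<And>i. i < length es \<Longrightarrow> poly_bounded (gs i)"
    "\<And>i \<mu>. i < length es \<Longrightarrow> length (eval one sem \<mu> (es ! i)) \<le> gs i (L 0 \<mu>)"
    by blast+
  let ?G = "\<lambda>y. \<Sum>i<length es. gs i y"
  have "length (eval one sem \<mu> (Op op es)) \<le> h (?G (L 0 \<mu>))" for \<mu>
  proof -
    let ?ws = "map (eval one sem \<mu>) es"
    have "maxlen ?ws \<le> ?G (L 0 \<mu>)"
    proof (rule maxlen_le)
      fix w assume "w \<in> set ?ws"
      then obtain i where i: "i < length es" "w = eval one sem \<mu> (es ! i)" by (auto simp: in_set_conv_nth)
      then have "length w \<le> gs i (L 0 \<mu>)" using gs(2) by blast
      also have "\<dots> \<le> ?G (L 0 \<mu>)" using i by (intro member_le_sum) auto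
      finally show "length w \<le> ?G (L 0 \<mu>)" .
    qed
    then show ?thesis using h(2)[of ?ws] TOp.hyps(3) poly_bounded_mono[OF h(1)] by fastforce
  qed
  moreover have "poly_bounded (\<lambda>y. h (?G y))"
    using gs(1) by (intro poly_bounded_comp[OF h(1)] poly_bounded_sum) auto
  ultimately show ?case by blast
next
  case (TDcl ti to e1 \<tau>1 e2 \<tau>)
  then obtain g where "poly_bounded g" "\<And>\<mu>. length (eval one sem \<mu> e2) \<le> g (L 0 \<mu>)" by auto
  moreover have "length (eval one sem \<mu> (Declass e1 e2)) \<le> length (eval one sem \<mu> e2)" for \<mu>
    by simp
  ultimately show ?case by (meson le_trans)
qed

lemma poly_growth_Assign:
  assumes "sty ar \<Gamma> \<Delta> 0 0 (Assign x e) \<sigma>"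
  shows "poly_growth (Assign x e)"
proof (cases "evars e \<subseteq> V")
  case False
  then have "\<not> rch (\<mu>, Assign x e)" for \<mu> using rch_svars[of \<mu> "Assign x e"] by auto
  then show ?thesis using poly_growthI[OF poly_bounded_id] by blast
next
  case True
  obtain \<tau> where "ety ar \<Gamma> \<Delta> 0 0 e \<tau>" using assms by (auto elim: sty_AssignE)
  then obtain g where g: "poly_bounded g" "\<And>\<mu>. length (eval one sem \<mu> e) \<le> g (L 0 \<mu>)"
    using eval_poly_bounded True by blast
  show ?thesis
  proof (rule poly_growthI[OF poly_bounded_add[OF poly_bounded_id g(1)]])
    fix \<mu> b \<mu>' assume "rch (\<mu>, Assign x e)" "big_step one sem (\<mu>, Assign x e) (b, \<mu>')"
    moreover have "L 0 (\<mu>(x := eval one sem \<mu> e)) \<le> L 0 \<mu> + g (L 0 \<mu>)"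
      using g(2) by (intro len_above_upd[OF finite_V]) (simp add: trans_le_add2)
    ultimately show "L 0 \<mu>' \<le> L 0 \<mu> + g (L 0 \<mu>)" by (auto elim: big_step_AssignE)
  qed
qed

lemma poly_growth_Seq:
  assumes "poly_growth s1" "poly_growth s2"
  shows "poly_growth (Seq s1 s2)"
proof -
  obtain f1 f2 where f1: "poly_bounded f1"
    "\<And>\<mu> b \<mu>'. rch (\<mu>, s1) \<Longrightarrow> big_step one sem (\<mu>, s1) (b, \<mu>') \<Longrightarrow> L 0 \<mu>' \<le> f1 (L 0 \<mu>)"
    and f2: "poly_bounded f2"
    "\<And>\<mu> b \<mu>'. rch (\<mu>, s2) \<Longrightarrow> big_step one sem (\<mu>, s2) (b, \<mu>') \<Longrightarrow> L 0 \<mu>' \<le> f2 (L 0 \<mu>)"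
    using assms unfolding poly_growth_def by blast
  show ?thesis
  proof (rule poly_growthI[OF poly_bounded_add[OF f1(1) poly_bounded_comp[OF f2(1) f1(1)]]])
    fix \<mu> b \<mu>' assume r: "rch (\<mu>, Seq s1 s2)" "big_step one sem (\<mu>, Seq s1 s2) (b, \<mu>')"
    from r(2) show "L 0 \<mu>' \<le> f1 (L 0 \<mu>) + f2 (f1 (L 0 \<mu>))"
    proof (cases rule: big_step_Seq_cases)
      case Break
      then show ?thesis using f1(2)[OF rch_Seq1[OF r(1)]] by fastforce
    next
      case (Normal \<mu>1)
      have "f2 (L 0 \<mu>1) \<le> f2 (f1 (L 0 \<mu>))"
        using f1(2)[OF rch_Seq1[OF r(1)] Normal(1)] by (rule poly_bounded_mono[OF f2(1)])
      then show ?thesis using f2(2)[OF rch_Seq2[OF r(1) Normal(1)] Normal(2)] by linarith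
    qed
  qed
qed

lemma poly_growth_If:
  assumes "poly_growth s1" "poly_growth s2"
  shows "poly_growth (If e s1 s2)"
proof -
  obtain f1 f2 where f1: "poly_bounded f1"
    "\<And>\<mu> b \<mu>'. rch (\<mu>, s1) \<Longrightarrow> big_step one sem (\<mu>, s1) (b, \<mu>') \<Longrightarrow> L 0 \<mu>' \<le> f1 (L 0 \<mu>)"
    and f2: "poly_bounded f2"
    "\<And>\<mu> b \<mu>'. rch (\<mu>, s2) \<Longrightarrow> big_step one sem (\<mu>, s2) (b, \<mu>') \<Longrightarrow> L 0 \<mu>' \<le> f2 (L 0 \<mu>)"
    using assms unfolding poly_growth_def by blast
  show ?thesis
  proof (rule poly_growthI[OF poly_bounded_add[OF f1(1) f2(1)]])
    fix \<mu> b \<mu>' assume r: "rch (\<mu>, If e s1 s2)" "big_step one sem (\<mu>, If e s1 s2) (b, \<mu>')"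
    from r(2) show "L 0 \<mu>' \<le> f1 (L 0 \<mu>) + f2 (L 0 \<mu>)"
    proof (cases rule: big_step_If_cases)
      case Then
      then show ?thesis using f1(2)[OF rch_IfT[OF r(1)]] by fastforce
    next
      case Else
      then show ?thesis using f2(2)[OF rch_IfF[OF r(1)]] by fastforce
    qed
  qed
qed

text \<open>At the top level a loop's growth bound at level \<open>0\<close> only depends on data of level
  \<open>\<ge> 1\<close>, which is part of the level-\<open>0\<close> data.\<close>
lemma poly_growth_of_level_growth: "level_growth s \<Longrightarrow> poly_growth s"
proof -
  assume "level_growth s"
  then obtain p where p: "poly_bounded p"
    "\<And>\<mu> b \<mu>' j. rch (\<mu>, s) \<Longrightarrow> big_step one sem (\<mu>, s) (b, \<mu>') \<Longrightarrow> L j \<mu>' \<le> L j \<mu> + p (L (Suc j) \<mu>)"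
    unfolding level_growth_def by blast
  show ?thesis
  proof (rule poly_growthI[OF poly_bounded_add[OF poly_bounded_id p(1)]])
    fix \<mu> b \<mu>' assume "rch (\<mu>, s)" "big_step one sem (\<mu>, s) (b, \<mu>')"
    moreover have "p (L 1 \<mu>) \<le> p (L 0 \<mu>)"
      by (intro poly_bounded_mono[OF p(1)] len_above_antimono[OF finite_V]) simp
    ultimately show "L 0 \<mu>' \<le> L 0 \<mu> + p (L 0 \<mu>)" using p(2)[of \<mu> b \<mu>' 0] by simp
  qed
qed

theorem sty_poly_growth: "sty ar \<Gamma> \<Delta> 0 0 s \<sigma> \<Longrightarrow> poly_growth s"
proof (induction s arbitrary: \<sigma>)
  case Skip
  show ?case by (rule poly_growth_id) (auto elim: big_step_SkipE)
next
  case (Break e)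
  show ?case by (rule poly_growth_id) (auto elim: big_step_BreakE)
next
  case (Assign x e)
  then show ?case by (rule poly_growth_Assign)
next
  case (Seq s1 s2)
  from Seq.prems show ?case by (elim sty_SeqE) (use Seq.IH poly_growth_Seq in blast)
next
  case (If e s1 s2)
  from If.prems show ?case by (elim sty_IfE) (use If.IH poly_growth_If in blast)
next
  case (While e a)
  from While.prems obtain \<tau> T where "1 \<le> \<tau>" "\<tau> \<le> T" "ety ar \<Gamma> \<Delta> \<tau> T e \<tau>" "sty ar \<Gamma> \<Delta> \<tau> T a \<tau>"
    by (rule sty_WhileE) blast
  then have "sty ar \<Gamma> \<Delta> \<tau> T (While e a) \<tau>" by (intro TWh)
  with \<open>1 \<le> \<tau>\<close> \<open>\<tau> \<le> T\<close> show ?case by (intro poly_growth_of_level_growth sty_level_growth) simp_all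
qed

end

lemma init_store_in: "init_store xs ws x = [] \<or> init_store xs ws x \<in> set ws"
proof -
  have "foldl (\<lambda>\<mu> (x, w). \<mu>(x := w)) \<mu> (zip xs ws) y \<in> insert (\<mu> y) (set ws)" for \<mu> y
  proof (induction xs arbitrary: \<mu> ws)
    case (Cons x xs)
    then show ?case
    proof (cases ws)
      case (Cons w ws')
      then show ?thesis using Cons.IH[of "\<mu>(x := w)" ws'] by auto
    qed simp
  qed simp
  then show ?thesis unfolding init_store_def by auto
qed

theorem safe_aperiodic_output_poly_bounded:
  fixes zero one :: "'a::countable"
  assumes "Q \<in> SAFE zero one ar sem" "Q \<in> AP one sem"
  obtains f where "poly_bounded f" "\<And>ws w. computes one sem Q ws w \<Longrightarrow> length w \<le> f (maxlen ws)"
proof -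
  obtain \<Gamma> \<Delta> \<sigma> where safe: "safe_env zero one ar sem \<Delta>" and ty: "sty ar \<Gamma> \<Delta> 0 0 (body Q) \<sigma>"
    using assms(1) unfolding SAFE_def by blast
  interpret safe_aperiodic zero one ar sem \<Gamma> \<Delta> "body Q"
    using safe assms(2) unfolding AP_iff_aperiodic by unfold_locales
  obtain f where f: "poly_bounded f" and growth: "\<And>\<mu> b \<mu>'. rch (\<mu>, body Q) \<Longrightarrow>
      big_step one sem (\<mu>, body Q) (b, \<mu>') \<Longrightarrow> L 0 \<mu>' \<le> f (L 0 \<mu>)"
    using sty_poly_growth[OF ty] unfolding poly_growth_def by blast
  have "length w \<le> f (maxlen ws) + maxlen ws" if result: "computes one sem Q ws w" for ws w
  proof -
    let ?\<mu>0 = "init_store (params Q) ws"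
    obtain b \<mu>' where run: "big_step one sem (?\<mu>0, body Q) (b, \<mu>')" and w: "\<mu>' (ret Q) = w"
      using result unfolding computes_def by blast
    have init: "length (?\<mu>0 x) \<le> maxlen ws" for x
      using init_store_in[of "params Q" ws x] maxlen_ge by fastforce
    have "L 0 \<mu>' \<le> f (L 0 ?\<mu>0)" using growth[OF reachable_init run] .
    also have "\<dots> \<le> f (maxlen ws)"
      using init by (intro poly_bounded_mono[OF f] len_above_le[OF finite_V])
    finally have "L 0 \<mu>' \<le> f (maxlen ws)" .
    moreover have "length (\<mu>' (ret Q)) \<le> L 0 \<mu>' \<or> \<mu>' (ret Q) = ?\<mu>0 (ret Q)"
      using len_above_ge[OF finite_V] big_step_unchanged_outside[OF run] by fastforce
    ultimately show ?thesis using init[of "ret Q"] w by auto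
  qed
  then show ?thesis using that[of "\<lambda>y. f y + y"] poly_bounded_add[OF f poly_bounded_id] by blast
qed

section \<open>A terminating program of exponential output length\<close>

text \<open>Variable \<open>3\<close> is never assigned, so it stays \<open>\<epsilon>\<close> and \<open>|x\<^sub>3| < |x|\<close> tests \<open>x \<noteq> \<epsilon>\<close>.
  The inner loop prepends \<open>|x\<^sub>2|\<close> ones to \<open>x\<^sub>1\<close>; the outer loop, run once per letter of the
  input \<open>x\<^sub>0\<close>, copies \<open>x\<^sub>1\<close> to \<open>x\<^sub>2\<close> first and thus doubles \<open>x\<^sub>1\<close>.\<close>
definition append_ones_loop :: "'op \<Rightarrow> 'op \<Rightarrow> 'op \<Rightarrow> 'op stmt" where
  "append_ones_loop lt tlo suc = While (Op lt [Var 3, Var 2])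
     (Seq (Assign 2 (Op tlo [Var 2])) (Assign 1 (Op suc [Var 1])))"

definition doubling_loop :: "'op \<Rightarrow> 'op \<Rightarrow> 'op \<Rightarrow> 'op stmt" where
  "doubling_loop lt tlo suc = While (Op lt [Var 3, Var 0])
     (Seq (Assign 0 (Op tlo [Var 0])) (Seq (Assign 2 (Var 1)) (append_ones_loop lt tlo suc)))"

definition exp_prog :: "'op \<Rightarrow> 'op \<Rightarrow> 'op \<Rightarrow> 'op prog" where
  "exp_prog lt tlo suc = Prog [0] (Seq (Assign 1 (Op suc [Var 3])) (doubling_loop lt tlo suc)) 1"

locale exp_ops =
  fixes zero one :: 'a and sem :: "'op \<Rightarrow> 'a word list \<Rightarrow> 'a word" and lt tlo suc :: 'op
  assumes zero_one: "zero \<noteq> one"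
    and lt: "\<And>u v. sem lt [u, v] = bool_w zero one (length u < length v)"
    and tlo: "\<And>w. sem tlo [w] = tl w"
    and suc: "\<And>w. sem suc [w] = one # w"
begin

lemma eval_guard: "\<mu> 3 = [] \<Longrightarrow> eval one sem \<mu> (Op lt [Var 3, Var v]) = [one] \<longleftrightarrow> \<mu> v \<noteq> []"
  using lt zero_one by (simp add: bool_w_def)

lemma append_ones_loop_run:
  "\<mu> 3 = [] \<Longrightarrow> length (\<mu> 2) = n \<Longrightarrow>
    big_step one sem (\<mu>, append_ones_loop lt tlo suc) (True, \<mu>(2 := [], 1 := replicate n one @ \<mu> 1))"
proof (induction n arbitrary: \<mu>)
  case 0
  then have "eval one sem \<mu> (Op lt [Var 3, Var 2]) \<noteq> [one]" using eval_guard[of \<mu> 2] by simp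
  then have "big_step one sem (\<mu>, append_ones_loop lt tlo suc) (True, \<mu>)"
    unfolding append_ones_loop_def by (rule BWhileF)
  moreover have "\<mu>(2 := [], 1 := replicate 0 one @ \<mu> 1) = \<mu>" using 0 by auto
  ultimately show ?case by (simp only:)
next
  case (Suc n)
  let ?\<mu>1 = "\<mu>(2 := tl (\<mu> 2), 1 := one # \<mu> 1)"
  have guard: "eval one sem \<mu> (Op lt [Var 3, Var 2]) = [one]" using eval_guard[of \<mu> 2] Suc.prems by auto
  have "big_step one sem (\<mu>, Assign 2 (Op tlo [Var 2])) (True, \<mu>(2 := tl (\<mu> 2)))"
    using BAssign[of one sem \<mu> 2 "Op tlo [Var 2]"] by (simp add: tlo)
  moreover have "big_step one sem (\<mu>(2 := tl (\<mu> 2)), Assign 1 (Op suc [Var 1])) (True, ?\<mu>1)"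
    using BAssign[of one sem "\<mu>(2 := tl (\<mu> 2))" 1 "Op suc [Var 1]"] by (simp add: suc)
  ultimately have body: "big_step one sem
      (\<mu>, Seq (Assign 2 (Op tlo [Var 2])) (Assign 1 (Op suc [Var 1]))) (True, ?\<mu>1)"
    by (rule BSeq)
  have eq: "?\<mu>1(2 := [], 1 := replicate n one @ ?\<mu>1 1) = \<mu>(2 := [], 1 := replicate (Suc n) one @ \<mu> 1)"
    by (rule ext) (simp add: replicate_app_Cons_same)
  have "big_step one sem (?\<mu>1, append_ones_loop lt tlo suc) (True, ?\<mu>1(2 := [], 1 := replicate n one @ ?\<mu>1 1))"
    by (rule Suc.IH) (use Suc.prems in simp_all)
  from BSeq[OF body this[unfolded eq]] show ?case
    unfolding append_ones_loop_def by (rule BWhileT[OF guard])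
qed

lemma doubling_loop_run:
  "\<mu> 3 = [] \<Longrightarrow> length (\<mu> 0) = n \<Longrightarrow> \<mu> 1 = replicate m one \<Longrightarrow>
    \<exists>\<mu>'. big_step one sem (\<mu>, doubling_loop lt tlo suc) (True, \<mu>') \<and> \<mu>' 1 = replicate (m * 2 ^ n) one"
proof (induction n arbitrary: \<mu> m)
  case 0
  then have "eval one sem \<mu> (Op lt [Var 3, Var 0]) \<noteq> [one]" using eval_guard[of \<mu> 0] by simp
  then have "big_step one sem (\<mu>, doubling_loop lt tlo suc) (True, \<mu>)"
    unfolding doubling_loop_def by (rule BWhileF)
  then show ?case using 0 by auto
next
  case (Suc n)
  let ?\<mu>1 = "\<mu>(0 := tl (\<mu> 0), 2 := \<mu> 1)"
  let ?\<mu>2 = "?\<mu>1(2 := [], 1 := replicate m one @ ?\<mu>1 1)"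
  have guard: "eval one sem \<mu> (Op lt [Var 3, Var 0]) = [one]" using eval_guard[of \<mu> 0] Suc.prems by auto
  have "big_step one sem (\<mu>, Assign 0 (Op tlo [Var 0])) (True, \<mu>(0 := tl (\<mu> 0)))"
    using BAssign[of one sem \<mu> 0 "Op tlo [Var 0]"] by (simp add: tlo)
  moreover have "big_step one sem (\<mu>(0 := tl (\<mu> 0)), Assign 2 (Var 1)) (True, ?\<mu>1)"
    using BAssign[of one sem "\<mu>(0 := tl (\<mu> 0))" 2 "Var 1"] by simp
  moreover have "big_step one sem (?\<mu>1, append_ones_loop lt tlo suc) (True, ?\<mu>2)"
    using Suc.prems by (intro append_ones_loop_run) simp_all
  ultimately have body: "big_step one sem (\<mu>, Seq (Assign 0 (Op tlo [Var 0]))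
      (Seq (Assign 2 (Var 1)) (append_ones_loop lt tlo suc))) (True, ?\<mu>2)"
    by (blast intro: BSeq)
  have "?\<mu>2 3 = []" "length (?\<mu>2 0) = n" "?\<mu>2 1 = replicate (m + m) one"
    using Suc.prems by (simp_all add: replicate_add)
  then obtain \<mu>' where \<mu>': "big_step one sem (?\<mu>2, doubling_loop lt tlo suc) (True, \<mu>')"
    "\<mu>' 1 = replicate ((m + m) * 2 ^ n) one"
    using Suc.IH by blast
  from BSeq[OF body \<mu>'(1)] have "big_step one sem (\<mu>, doubling_loop lt tlo suc) (True, \<mu>')"
    unfolding doubling_loop_def by (rule BWhileT[OF guard])
  moreover have "(m + m) * 2 ^ n = m * 2 ^ Suc n" by simp
  ultimately show ?case using \<mu>'(2) by auto
qed

lemma exp_prog_computes: "computes one sem (exp_prog lt tlo suc) [w] (replicate (2 ^ length w) one)"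
proof -
  let ?\<mu>0 = "init_store [0] [w]"
  have \<mu>0: "?\<mu>0 = (\<lambda>_. [])(0 := w)" unfolding init_store_def by simp
  have start: "big_step one sem (?\<mu>0, Assign 1 (Op suc [Var 3])) (True, ?\<mu>0(1 := [one]))"
    using BAssign[of one sem ?\<mu>0 1 "Op suc [Var 3]"] suc by (simp add: \<mu>0)
  obtain \<mu>' where "big_step one sem (?\<mu>0(1 := [one]), doubling_loop lt tlo suc) (True, \<mu>')"
    and out: "\<mu>' 1 = replicate (1 * 2 ^ length w) one"
    using doubling_loop_run[of "?\<mu>0(1 := [one])" "length w" 1] by (auto simp: \<mu>0)
  then have "big_step one sem (?\<mu>0, body (exp_prog lt tlo suc)) (True, \<mu>')"
    unfolding exp_prog_def using BSeq[OF start] by simp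
  then show ?thesis using out unfolding computes_def by (auto simp: exp_prog_def)
qed

lemma exp_prog_TERM: "exp_prog lt tlo suc \<in> TERM_progs one sem"
  unfolding TERM_progs_def
proof (intro CollectI allI impI)
  fix ws :: "'a word list"
  assume "length ws = length (params (exp_prog lt tlo suc))"
  then obtain w where "ws = [w]" by (auto simp: exp_prog_def length_Suc_conv)
  then show "\<exists>w. computes one sem (exp_prog lt tlo suc) ws w" using exp_prog_computes by blast
qed

lemma exp_prog_not_poly_bounded:
  assumes "poly_bounded f"
  obtains ws w where "computes one sem (exp_prog lt tlo suc) ws w" "f (maxlen ws) < length w"
proof -
  obtain c k where f: "\<And>y. f y \<le> c * (y + 1) ^ k" using assms unfolding poly_bounded_def by blast
  obtain n where "c * (n + 1) ^ k < 2 ^ n" using poly_less_two_power by blast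
  then have "f (maxlen [replicate n zero]) < length (replicate (2 ^ n) one)"
    using f[of n] by (simp add: maxlen_def)
  then show ?thesis using that exp_prog_computes[of "replicate n zero"] by simp
qed

end

theorem mainTheorem3:
  fixes zero one :: "'a::finite"
    and ar :: "'op \<Rightarrow> nat"
    and sem :: "'op \<Rightarrow> 'a list list \<Rightarrow> 'a list"
  assumes "zero \<noteq> one"
    and "std_ops zero one ar sem"
  shows "SAFE zero one ar sem \<inter> AP one sem \<subseteq> TERM_progs one sem \<and>
         (\<exists>P \<in> TERM_progs one sem. \<forall>Q \<in> SAFE zero one ar sem \<inter> AP one sem. \<not> same_fun one sem Q P)"
proof
  show "SAFE zero one ar sem \<inter> AP one sem \<subseteq> TERM_progs one sem"
    using safe_aperiodic_terminates by blast
  obtain lt tlo suc where "\<forall>u v. sem lt [u, v] = bool_w zero one (length u < length v)"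
    "\<forall>w. sem tlo [w] = tl w" "\<forall>w. sem suc [w] = one # w"
    using assms(2) unfolding std_ops_def by blast
  then interpret exp_ops zero one sem lt tlo suc
    using assms(1) by unfold_locales simp_all
  show "\<exists>P \<in> TERM_progs one sem. \<forall>Q \<in> SAFE zero one ar sem \<inter> AP one sem. \<not> same_fun one sem Q P"
  proof (intro bexI[OF _ exp_prog_TERM] ballI notI)
    fix Q assume Q: "Q \<in> SAFE zero one ar sem \<inter> AP one sem"
      and same: "same_fun one sem Q (exp_prog lt tlo suc)"
    obtain f where f: "poly_bounded f" and bound: "\<And>ws w. computes one sem Q ws w \<Longrightarrow> length w \<le> f (maxlen ws)"
      using safe_aperiodic_output_poly_bounded Q by blast
    obtain ws w where "computes one sem (exp_prog lt tlo suc) ws w" "f (maxlen ws) < length w"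
      using exp_prog_not_poly_bounded[OF f] by blast
    then show False using same bound unfolding same_fun_def by (meson not_le)
  qed
qed

end
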